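(* Let $\kappa$ be a regular infinite cardinal and $\mu$ a singular cardinal with $\mathrm{cf}(\mu)=\kappa$. For $X,X'\in\{{}^{\kappa}\mu,{}^{\mu}2,{}^{\mu}\kappa,{}^{\mu}\mu\}$, the spaces $(X,\mathrm{bd})$ and $(X',\mathrm{bd})$ are homeomorphic if and only if $w(X,\mathrm{bd})=w(X',\mathrm{bd})$.
   Context: For ordinals $\delta,\rho$, ${}^{\delta}\rho$ is the set of functions $\delta\to\rho$; for a partial function $s\colon\delta\rightharpoonup\rho$, $[s]=\{f\in{}^{\delta}\rho: s\subseteq f\}$. The bounded topology on ${}^{\delta}\rho$ has base $\{[s]: s\in{}^{\alpha}\rho,\ \alpha<\delta\}$; $(X,\mathrm{bd})$ denotes $X$ with this topology. $w$ denotes weight (least size of a base). *)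

theory Defs
  imports "HOL-Analysis.Analysis"
begin

unbundle cardinal_syntax

text \<open>An ordinal delta is represented by a well-order r (delta = order type of r, its
elements are Field r, and alpha < delta corresponds to the proper initial segments
underS r a, a in Field r). The codomain rho is represented by a set R (the bounded
topology only depends on the underlying set of rho).\<close>

definition bd_carrier :: "'d rel \<Rightarrow> 'c set \<Rightarrow> ('d \<Rightarrow> 'c) set" where
  "bd_carrier r R = (Field r \<rightarrow>\<^sub>E R)"

definition bd_basic :: "'d rel \<Rightarrow> 'c set \<Rightarrow> ('d \<Rightarrow> 'c) set set" where
  "bd_basic r R = {{f \<in> bd_carrier r R. \<forall>x \<in> underS r a. f x = s x} | a s.
                     a \<in> Field r \<and> (\<forall>x \<in> underS r a. s x \<in> R)}"

definition bd_space :: "'d rel \<Rightarrow> 'c set \<Rightarrow> ('d \<Rightarrow> 'c) topology" where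
  "bd_space r R = topology (arbitrary union_of (\<lambda>V. V \<in> bd_basic r R))"

definition is_base :: "'a topology \<Rightarrow> 'a set set \<Rightarrow> bool" where
  "is_base T B \<longleftrightarrow> openin T = arbitrary union_of (\<lambda>V. V \<in> B)"

definition weight_le :: "'a topology \<Rightarrow> 'b topology \<Rightarrow> bool" where
  "weight_le T T' \<longleftrightarrow> (\<forall>B'. is_base T' B' \<longrightarrow> (\<exists>B. is_base T B \<and> card_of B \<le>o card_of B'))"

definition same_weight :: "'a topology \<Rightarrow> 'b topology \<Rightarrow> bool" where
  "same_weight T T' \<longleftrightarrow> weight_le T T' \<and> weight_le T' T"

definition homeo_iff_same_weight :: "'a topology \<Rightarrow> 'b topology \<Rightarrow> bool" where
  "homeo_iff_same_weight T T' \<longleftrightarrow> (T homeomorphic_space T' \<longleftrightarrow> same_weight T T')"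

definition cf_eq :: "'a rel \<Rightarrow> 'b rel \<Rightarrow> bool" where
  "cf_eq r k \<longleftrightarrow> (\<exists>K \<subseteq> Field r. cofinal K r \<and> card_of K =o k) \<and>
                 (\<forall>K \<subseteq> Field r. cofinal K r \<longrightarrow> k \<le>o card_of K)"

end

theory Submission
  imports Defs
begin

text \<open>
  A basic set [s] with s : \<alpha> \<rightarrow> \<rho>, \<alpha> < \<delta>, is determined by the pair (\<alpha>, s), so the weight
  of (^\<delta>\<rho>, bd) is the number of such pairs; homeomorphic spaces have the same weight.
  Conversely, let cf \<delta> = \<kappa> and let W have the size of that weight. Fix a sequence
  c \<xi> (\<xi> < \<kappa>) cofinal in \<delta> and assign basic sets to the nodes of the tree ^<\<kappa>W by recursion:
  at stage \<xi> the basic sets chosen along a branch intersect to a basic set again (fewer than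
  \<kappa> bounded domains have a bounded union), and that set is split into |W| basic sets whose
  domains contain c \<xi>. Splitting is possible as soon as every basic set contains at least \<kappa>
  disjoint ones, which holds for all four spaces. Mapping g \<in> ^\<kappa>W to the point determined by its
  branch is then a homeomorphism ^\<kappa>W \<rightarrow> (^\<delta>\<rho>, bd), so spaces of equal weight are homeomorphic.
\<close>

section \<open>Weight\<close>

lemma homeomorphic_space_weight_le:
  assumes "X homeomorphic_space Y"
  shows "weight_le X Y"
  unfolding weight_le_def
proof (intro allI impI)
  fix B' assume "is_base Y B'"
  then have B'_open: "\<And>V. V \<in> B' \<Longrightarrow> openin Y V"
    and B'_nbhd: "\<And>U y. openin Y U \<Longrightarrow> y \<in> U \<Longrightarrow> \<exists>V\<in>B'. y \<in> V \<and> V \<subseteq> U"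
    unfolding is_base_def openin_topology_base_unique by blast+
  obtain f g where fg: "homeomorphic_maps X Y f g"
    using assms unfolding homeomorphic_space_def by blast
  then have g_open: "openin X (g ` V)" if "openin Y V" for V
    using homeomorphic_imp_open_map homeomorphic_maps_map that unfolding open_map_def by blast
  have f_open: "openin Y (f ` U)" if "openin X U" for U
    using fg homeomorphic_imp_open_map homeomorphic_maps_map that unfolding open_map_def by blast
  have gf: "g (f x) = x" if "x \<in> topspace X" for x
    using fg that unfolding homeomorphic_maps_def by blast
  have "is_base X ((`) g ` B')"
    unfolding is_base_def openin_topology_base_unique
  proof (intro conjI allI impI)
    fix V assume "V \<in> (`) g ` B'"
    then show "openin X V" using g_open B'_open by blast
  next
    fix U x assume U: "openin X U \<and> x \<in> U"
    then have x: "x \<in> topspace X" and U_sub: "U \<subseteq> topspace X"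
      using openin_subset by blast+
    obtain V where V: "V \<in> B'" "f x \<in> V" "V \<subseteq> f ` U"
      using B'_nbhd[OF f_open] U by blast
    have "g ` V \<subseteq> U"
    proof
      fix y assume "y \<in> g ` V"
      then obtain u where "u \<in> U" "y = g (f u)" using V(3) by blast
      then show "y \<in> U" using gf U_sub by auto
    qed
    moreover have "x \<in> g ` V" using V(2) gf[OF x] by (metis image_eqI)
    ultimately show "\<exists>V'. V' \<in> (`) g ` B' \<and> x \<in> V' \<and> V' \<subseteq> U" using V(1) by blast
  qed
  then show "\<exists>B. is_base X B \<and> |B| \<le>o |B'|" using card_of_image by blast
qed

lemma homeomorphic_space_same_weight: "X homeomorphic_space Y \<Longrightarrow> same_weight X Y"
  unfolding same_weight_def
  by (meson homeomorphic_space_sym homeomorphic_space_weight_le)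

lemma infinite_imp_two_elements: "infinite A \<Longrightarrow> \<exists>u v. u \<in> A \<and> v \<in> A \<and> u \<noteq> v"
  by (metis finite.emptyI finite_insert finite_subset insertCI subsetI)

section \<open>Nodes and cylinders\<close>

text \<open>A node (underS r a, s) with s \<in> underS r a \<rightarrow> R encodes the basic set [s].\<close>

type_synonym ('d, 'c) node = "'d set \<times> ('d \<Rightarrow> 'c)"

definition bd_cyl :: "'d rel \<Rightarrow> 'c set \<Rightarrow> ('d, 'c) node \<Rightarrow> ('d \<Rightarrow> 'c) set" where
  "bd_cyl r R n = {f \<in> bd_carrier r R. \<forall>x\<in>fst n. f x = snd n x}"

definition bd_nodes :: "'d rel \<Rightarrow> 'c set \<Rightarrow> ('d, 'c) node set" where
  "bd_nodes r R = (\<Union>a\<in>Field r. {underS r a} \<times> (underS r a \<rightarrow>\<^sub>E R))"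

definition node_le :: "('d, 'c) node \<Rightarrow> ('d, 'c) node \<Rightarrow> bool" where
  "node_le n m \<longleftrightarrow> fst n \<subseteq> fst m \<and> (\<forall>x\<in>fst n. snd m x = snd n x)"

lemma mem_bd_nodes: "n \<in> bd_nodes r R \<longleftrightarrow> (\<exists>a\<in>Field r. fst n = underS r a) \<and> snd n \<in> fst n \<rightarrow>\<^sub>E R"
  by (cases n) (auto simp: bd_nodes_def)

lemma node_le_refl: "node_le n n"
  by (simp add: node_le_def)

lemma node_le_trans: "node_le n m \<Longrightarrow> node_le m p \<Longrightarrow> node_le n p"
  by (auto simp: node_le_def)

lemma bd_cyl_antimono: "node_le n m \<Longrightarrow> bd_cyl r R m \<subseteq> bd_cyl r R n"
  by (auto simp: node_le_def bd_cyl_def)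

lemma bd_cyl_subset_carrier: "bd_cyl r R n \<subseteq> bd_carrier r R"
  by (auto simp: bd_cyl_def)

lemma bd_basic_eq: "bd_basic r R = bd_cyl r R ` bd_nodes r R"
proof (intro equalityI subsetI)
  fix V assume "V \<in> bd_basic r R"
  then obtain a s where a: "a \<in> Field r" and s: "\<forall>x\<in>underS r a. s x \<in> R"
    and V: "V = {f \<in> bd_carrier r R. \<forall>x\<in>underS r a. f x = s x}"
    unfolding bd_basic_def by blast
  have "(underS r a, restrict s (underS r a)) \<in> bd_nodes r R"
    using a s unfolding bd_nodes_def by auto
  moreover have "V = bd_cyl r R (underS r a, restrict s (underS r a))"
    unfolding V bd_cyl_def by auto
  ultimately show "V \<in> bd_cyl r R ` bd_nodes r R" by blast
next
  fix V assume "V \<in> bd_cyl r R ` bd_nodes r R"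
  then obtain a s where "a \<in> Field r" "s \<in> underS r a \<rightarrow>\<^sub>E R" "V = bd_cyl r R (underS r a, s)"
    unfolding bd_nodes_def by blast
  then show "V \<in> bd_basic r R"
    unfolding bd_basic_def bd_cyl_def by auto
qed

lemma card_bd_basic_le: "|bd_basic r R| \<le>o |bd_nodes r R|"
  unfolding bd_basic_eq by (rule card_of_image)

lemma bd_cyl_disjoint:
  assumes "n \<in> bd_nodes r R" "m \<in> bd_nodes r R" "fst n = fst m" "n \<noteq> m"
  shows "bd_cyl r R n \<inter> bd_cyl r R m = {}"
proof -
  have "snd n \<noteq> snd m" using assms(3,4) by (simp add: prod_eq_iff)
  moreover have "snd n \<in> fst n \<rightarrow>\<^sub>E R" "snd m \<in> fst n \<rightarrow>\<^sub>E R"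
    using assms(1-3) by (auto simp: mem_bd_nodes)
  ultimately obtain x where "x \<in> fst n" "snd n x \<noteq> snd m x" by (metis PiE_ext)
  then show ?thesis using assms(3) unfolding bd_cyl_def by auto
qed

lemma bd_cyl_subset_if_mem:
  assumes "f \<in> bd_cyl r R n" "f \<in> bd_cyl r R m" "fst n \<subseteq> fst m"
  shows "bd_cyl r R m \<subseteq> bd_cyl r R n"
proof
  fix g assume g: "g \<in> bd_cyl r R m"
  have "g x = snd n x" if x: "x \<in> fst n" for x
  proof -
    have "x \<in> fst m" using x assms(3) by blast
    then have "g x = snd m x" "f x = snd m x" using g assms(2) unfolding bd_cyl_def by blast+
    moreover have "f x = snd n x" using assms(1) x unfolding bd_cyl_def by blast
    ultimately show ?thesis by simp
  qed
  then show "g \<in> bd_cyl r R n" using g unfolding bd_cyl_def by blast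
qed

definition node_partition :: "'d rel \<Rightarrow> 'c set \<Rightarrow> ('d, 'c) node \<Rightarrow> ('d, 'c) node set \<Rightarrow> bool" where
  "node_partition r R n P \<longleftrightarrow> P \<subseteq> bd_nodes r R \<and> (\<forall>p\<in>P. node_le n p) \<and>
     (\<forall>p\<in>P. \<forall>q\<in>P. p \<noteq> q \<longrightarrow> bd_cyl r R p \<inter> bd_cyl r R q = {}) \<and>
     bd_cyl r R n \<subseteq> (\<Union>p\<in>P. bd_cyl r R p)"

lemma node_partitionD:
  assumes "node_partition r R n P"
  shows "P \<subseteq> bd_nodes r R" "\<And>p. p \<in> P \<Longrightarrow> node_le n p"
    "\<And>p q. p \<in> P \<Longrightarrow> q \<in> P \<Longrightarrow> p \<noteq> q \<Longrightarrow> bd_cyl r R p \<inter> bd_cyl r R q = {}"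
    "bd_cyl r R n \<subseteq> (\<Union>p\<in>P. bd_cyl r R p)"
  using assms unfolding node_partition_def by blast+

lemma node_partition_UN:
  assumes Q: "node_partition r R n Q" and P: "\<And>q. q \<in> Q \<Longrightarrow> node_partition r R q (P q)"
  shows "node_partition r R n (\<Union>q\<in>Q. P q)"
  unfolding node_partition_def
proof (intro conjI ballI impI)
  show "(\<Union>q\<in>Q. P q) \<subseteq> bd_nodes r R"
    using node_partitionD(1)[OF P] by blast
next
  fix p assume "p \<in> (\<Union>q\<in>Q. P q)"
  then obtain q where q: "q \<in> Q" "p \<in> P q" by blast
  show "node_le n p"
    using node_le_trans[OF node_partitionD(2)[OF Q q(1)] node_partitionD(2)[OF P[OF q(1)] q(2)]] .
next
  fix p p' assume "p \<in> (\<Union>q\<in>Q. P q)" "p' \<in> (\<Union>q\<in>Q. P q)" "p \<noteq> p'"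
  then obtain q q' where q: "q \<in> Q" "p \<in> P q" and q': "q' \<in> Q" "p' \<in> P q'" by blast
  show "bd_cyl r R p \<inter> bd_cyl r R p' = {}"
  proof (cases "q = q'")
    case True
    then show ?thesis using node_partitionD(3)[OF P[OF q(1)] q(2) _ \<open>p \<noteq> p'\<close>] q'(2) by simp
  next
    case False
    have "bd_cyl r R p \<subseteq> bd_cyl r R q"
      by (rule bd_cyl_antimono[OF node_partitionD(2)[OF P[OF q(1)] q(2)]])
    moreover have "bd_cyl r R p' \<subseteq> bd_cyl r R q'"
      by (rule bd_cyl_antimono[OF node_partitionD(2)[OF P[OF q'(1)] q'(2)]])
    moreover have "bd_cyl r R q \<inter> bd_cyl r R q' = {}"
      using node_partitionD(3)[OF Q q(1) q'(1) False] .
    ultimately show ?thesis by blast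
  qed
next
  show "bd_cyl r R n \<subseteq> (\<Union>p\<in>(\<Union>q\<in>Q. P q). bd_cyl r R p)"
  proof
    fix f assume "f \<in> bd_cyl r R n"
    then obtain q where q: "q \<in> Q" "f \<in> bd_cyl r R q" using node_partitionD(4)[OF Q] by blast
    then obtain p where "p \<in> P q" "f \<in> bd_cyl r R p" using node_partitionD(4)[OF P[OF q(1)]] by blast
    then show "f \<in> (\<Union>p\<in>(\<Union>q\<in>Q. P q). bd_cyl r R p)" using q(1) by blast
  qed
qed

definition node_extensions :: "'d rel \<Rightarrow> 'c set \<Rightarrow> ('d, 'c) node \<Rightarrow> 'd \<Rightarrow> ('d, 'c) node set" where
  "node_extensions r R n h =
     {(underS r h, t) | t. t \<in> underS r h \<rightarrow>\<^sub>E R \<and> (\<forall>x\<in>fst n. t x = snd n x)}"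

lemma node_partition_extensions:
  assumes h: "h \<in> Field r" "fst n \<subseteq> underS r h"
  shows "node_partition r R n (node_extensions r R n h)"
  unfolding node_partition_def
proof (intro conjI ballI impI)
  show sub: "node_extensions r R n h \<subseteq> bd_nodes r R"
    using h(1) unfolding node_extensions_def bd_nodes_def by blast
  show "node_le n p" if "p \<in> node_extensions r R n h" for p
    using that h(2) unfolding node_extensions_def node_le_def by auto
  show "bd_cyl r R p \<inter> bd_cyl r R q = {}"
    if "p \<in> node_extensions r R n h" "q \<in> node_extensions r R n h" "p \<noteq> q" for p q
  proof -
    have "fst p = fst q" using that(1,2) unfolding node_extensions_def by auto
    then show ?thesis using bd_cyl_disjoint[of p r R q] that sub by blast
  qed
  show "bd_cyl r R n \<subseteq> (\<Union>p\<in>node_extensions r R n h. bd_cyl r R p)"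
  proof
    fix f assume f: "f \<in> bd_cyl r R n"
    then have "(underS r h, restrict f (underS r h)) \<in> node_extensions r R n h"
      using h(2) Order_Relation.underS_Field[of r h]
      unfolding bd_cyl_def bd_carrier_def node_extensions_def by (auto simp: PiE_iff)
    moreover have "f \<in> bd_cyl r R (underS r h, restrict f (underS r h))"
      using f unfolding bd_cyl_def by auto
    ultimately show "f \<in> (\<Union>p\<in>node_extensions r R n h. bd_cyl r R p)" by blast
  qed
qed

definition node_Union :: "'i set \<Rightarrow> ('i \<Rightarrow> ('d, 'c) node) \<Rightarrow> ('d, 'c) node" where
  "node_Union I N = ((\<Union>i\<in>I. fst (N i)),
     \<lambda>x. if \<exists>i\<in>I. x \<in> fst (N i) then snd (N (SOME i. i \<in> I \<and> x \<in> fst (N i))) x else undefined)"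

lemma node_Union_cong:
  assumes "\<And>i. i \<in> I \<Longrightarrow> N i = N' i"
  shows "node_Union I N = node_Union I N'"
proof -
  have "(\<lambda>i. i \<in> I \<and> x \<in> fst (N i)) = (\<lambda>i. i \<in> I \<and> x \<in> fst (N' i))" for x
    using assms by auto
  moreover have "snd (N i) = snd (N' i)" if "i \<in> I" for i using assms that by simp
  moreover have "(SOME i. i \<in> I \<and> x \<in> fst (N i)) \<in> I" if "\<exists>i\<in>I. x \<in> fst (N i)" for x
    using someI_ex[of "\<lambda>i. i \<in> I \<and> x \<in> fst (N i)"] that by blast
  ultimately show ?thesis
    using assms unfolding node_Union_def by (auto simp: fun_eq_iff)
qed

lemma fst_node_Union: "fst (node_Union I N) = (\<Union>i\<in>I. fst (N i))"
  by (simp add: node_Union_def)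

lemma snd_node_Union:
  assumes "x \<in> fst (node_Union I N)"
  obtains j where "j \<in> I" "x \<in> fst (N j)" "snd (node_Union I N) x = snd (N j) x"
proof -
  have ex: "\<exists>j. j \<in> I \<and> x \<in> fst (N j)" using assms by (auto simp: node_Union_def)
  then have "\<exists>j\<in>I. x \<in> fst (N j)" by blast
  define j where "j = (SOME j. j \<in> I \<and> x \<in> fst (N j))"
  have "j \<in> I" "x \<in> fst (N j)" using someI_ex[OF ex] unfolding j_def by blast+
  moreover have "snd (node_Union I N) x = snd (N j) x"
    using \<open>\<exists>j\<in>I. x \<in> fst (N j)\<close> unfolding node_Union_def j_def by simp
  ultimately show thesis using that by blast
qed

lemma node_Union_upper:
  assumes chain: "\<And>i j. i \<in> I \<Longrightarrow> j \<in> I \<Longrightarrow> node_le (N i) (N j) \<or> node_le (N j) (N i)"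
    and i: "i \<in> I"
  shows "node_le (N i) (node_Union I N)"
proof -
  have "snd (node_Union I N) x = snd (N i) x" if x: "x \<in> fst (N i)" for x
  proof -
    obtain j where j: "j \<in> I" "x \<in> fst (N j)" "snd (node_Union I N) x = snd (N j) x"
      using snd_node_Union[of x I N] i x unfolding fst_node_Union by blast
    then show ?thesis using chain[OF i j(1)] x unfolding node_le_def by auto
  qed
  then show ?thesis using i unfolding node_le_def fst_node_Union by auto
qed

lemma bd_cyl_node_Union:
  assumes "f \<in> bd_carrier r R" "\<And>i. i \<in> I \<Longrightarrow> f \<in> bd_cyl r R (N i)"
  shows "f \<in> bd_cyl r R (node_Union I N)"
proof -
  have "f x = snd (node_Union I N) x" if x: "x \<in> fst (node_Union I N)" for x
  proof -
    obtain j where "j \<in> I" "x \<in> fst (N j)" "snd (node_Union I N) x = snd (N j) x"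
      by (rule snd_node_Union[OF x])
    then show ?thesis using assms(2) unfolding bd_cyl_def by auto
  qed
  then show ?thesis using assms(1) unfolding bd_cyl_def by auto
qed

lemma node_Union_PiE:
  assumes "\<And>i. i \<in> I \<Longrightarrow> snd (N i) \<in> fst (N i) \<rightarrow>\<^sub>E R"
  shows "snd (node_Union I N) \<in> fst (node_Union I N) \<rightarrow>\<^sub>E R"
proof -
  have "snd (node_Union I N) x \<in> R" if x: "x \<in> fst (node_Union I N)" for x
  proof -
    obtain j where "j \<in> I" "x \<in> fst (N j)" "snd (node_Union I N) x = snd (N j) x"
      by (rule snd_node_Union[OF x])
    then show ?thesis using assms by (auto simp: PiE_iff)
  qed
  then show ?thesis by (auto simp: PiE_iff extensional_def node_Union_def)
qed

section \<open>Powers with an infinite cardinal exponent\<close>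

locale bd_power =
  fixes r :: "'d rel" and R :: "'c set"
  assumes card_order: "Card_order r" and infinite_Field: "infinite (Field r)"
    and two_values: "\<exists>u v. u \<in> R \<and> v \<in> R \<and> u \<noteq> v"
begin

lemma well_order: "Well_order r"
  using card_order card_order_on_well_order_on by blast

lemma wo: "wo_rel r"
  using well_order by (simp add: wo_rel_def)

lemma node_domain_ofilter: "n \<in> bd_nodes r R \<Longrightarrow> ofilter r (fst n)"
  using wo_rel.underS_ofilter[OF wo] by (auto simp: mem_bd_nodes)

lemma ofilter_under_subset: "ofilter r A \<Longrightarrow> (x, a) \<in> r \<Longrightarrow> a \<in> A \<Longrightarrow> x \<in> A"
  unfolding ofilter_def under_def by blast

lemma exists_greater: "a \<in> Field r \<Longrightarrow> \<exists>b\<in>Field r. a \<in> underS r b"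
  using infinite_Card_order_limit[OF card_order infinite_Field] unfolding underS_def by blast

lemma underS_induct[consumes 1, case_names less]:
  assumes "a \<in> Field r"
    and step: "\<And>x. x \<in> Field r \<Longrightarrow> (\<And>y. y \<in> underS r x \<Longrightarrow> P y) \<Longrightarrow> P x"
  shows "P a"
proof -
  have "a \<in> Field r \<longrightarrow> P a"
  proof (rule wo_rel.well_order_induct[OF wo])
    fix x assume IH: "\<forall>y. y \<noteq> x \<and> (y, x) \<in> r \<longrightarrow> y \<in> Field r \<longrightarrow> P y"
    show "x \<in> Field r \<longrightarrow> P x"
    proof
      assume "x \<in> Field r"
      moreover have "P y" if "y \<in> underS r x" for y
        using IH underS_Field[OF that] that unfolding underS_def by blast
      ultimately show "P x" by (rule step)
    qed
  qed
  then show ?thesis using assms(1) by blast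
qed

lemma underS_less: "a \<in> underS r b \<Longrightarrow> (a, b) \<in> r"
  by (simp add: underS_def)

lemma under_refl: "a \<in> Field r \<Longrightarrow> a \<in> under r a"
  by (rule Refl_under_in[OF wo_rel.REFL[OF wo]])

lemma under_eq_insert: "a \<in> Field r \<Longrightarrow> under r a = insert a (underS r a)"
  using Refl_under_underS[OF wo_rel.REFL[OF wo]] by blast

lemma under_subset_underS: "a \<in> underS r b \<Longrightarrow> under r a \<subseteq> underS r b"
  using wo_rel.underS_ofilter[OF wo] unfolding ofilter_def by blast

lemma restrict_under_PiE:
  "t \<in> under r b \<rightarrow>\<^sub>E A \<Longrightarrow> (a, b) \<in> r \<Longrightarrow> restrict t (under r a) \<in> under r a \<rightarrow>\<^sub>E A"
  using under_incr[OF wo_rel.TRANS[OF wo]] by (auto simp: PiE_iff)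

lemma restrict_restrict_under:
  "(a, b) \<in> r \<Longrightarrow> restrict (restrict t (under r b)) (under r a) = restrict t (under r a)"
  using under_incr[OF wo_rel.TRANS[OF wo]] by (auto simp: fun_eq_iff restrict_def)

lemma under_eq_underS: "\<exists>e\<in>Field r. under r a = underS r e"
proof -
  have "under r a \<noteq> Field r"
    using Card_order_infinite_not_under[OF card_order infinite_Field] by metis
  then show ?thesis
    using wo_rel.ofilter_underS_Field[OF wo, of "under r a"] wo_rel.under_ofilter[OF wo] by blast
qed

lemma bd_cyl_nested_or_disjoint:
  assumes "n \<in> bd_nodes r R" "m \<in> bd_nodes r R" "fst n \<subseteq> fst m"
  shows "bd_cyl r R n \<inter> bd_cyl r R m = {} \<or> bd_cyl r R m \<subseteq> bd_cyl r R n"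
proof (cases "node_le n m")
  case False
  then obtain x where x: "x \<in> fst n" "snd m x \<noteq> snd n x"
    using assms(3) unfolding node_le_def by blast
  have False if "f \<in> bd_cyl r R n" "f \<in> bd_cyl r R m" for f
  proof -
    have "f x = snd n x" using that(1) x(1) unfolding bd_cyl_def by blast
    moreover have "f x = snd m x" using that(2) x(1) assms(3) unfolding bd_cyl_def by blast
    ultimately show False using x(2) by simp
  qed
  then show ?thesis by blast
qed (use bd_cyl_antimono in blast)

lemma openin_bd_space: "openin (bd_space r R) = arbitrary union_of (\<lambda>V. V \<in> bd_basic r R)"
proof -
  have "istopology (arbitrary union_of (\<lambda>V. V \<in> bd_basic r R))"
    unfolding istopology_base_eq bd_basic_eq
  proof (intro allI impI)
    fix S T assume "S \<in> bd_cyl r R ` bd_nodes r R \<and> T \<in> bd_cyl r R ` bd_nodes r R"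
    then obtain n m where nm: "n \<in> bd_nodes r R" "m \<in> bd_nodes r R"
      and ST: "S = bd_cyl r R n" "T = bd_cyl r R m" by blast
    have "fst n \<subseteq> fst m \<or> fst m \<subseteq> fst n"
      using nm wo_rel.ofilter_linord[OF wo] node_domain_ofilter by blast
    then have "S \<inter> T \<in> {{}, S, T}"
      using bd_cyl_nested_or_disjoint[OF nm] bd_cyl_nested_or_disjoint[OF nm(2,1)] ST by blast
    then show "(arbitrary union_of (\<lambda>V. V \<in> bd_cyl r R ` bd_nodes r R)) (S \<inter> T)"
      using nm ST by (auto intro: arbitrary_union_of_inc)
  qed
  then show ?thesis unfolding bd_space_def by simp
qed

lemma is_base_bd_basic: "is_base (bd_space r R) (bd_basic r R)"
  unfolding is_base_def by (rule openin_bd_space)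

lemma openin_bd_space_base:
  "(\<forall>V. V \<in> bd_basic r R \<longrightarrow> openin (bd_space r R) V) \<and>
   (\<forall>U f. openin (bd_space r R) U \<and> f \<in> U \<longrightarrow> (\<exists>V. V \<in> bd_basic r R \<and> f \<in> V \<and> V \<subseteq> U))"
  using openin_bd_space unfolding openin_topology_base_unique .

lemma openin_bd_cyl: "n \<in> bd_nodes r R \<Longrightarrow> openin (bd_space r R) (bd_cyl r R n)"
  using openin_bd_space_base bd_basic_eq by blast

lemma openin_bd_space_nbhd:
  assumes "openin (bd_space r R) U" "f \<in> U"
  obtains n where "n \<in> bd_nodes r R" "f \<in> bd_cyl r R n" "bd_cyl r R n \<subseteq> U"
proof -
  obtain V where "V \<in> bd_basic r R" "f \<in> V" "V \<subseteq> U" using assms openin_bd_space_base by blast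
  then show thesis using that unfolding bd_basic_eq by blast
qed

lemma topspace_bd_space: "topspace (bd_space r R) = bd_carrier r R"
proof
  show "topspace (bd_space r R) \<subseteq> bd_carrier r R"
  proof
    fix f assume "f \<in> topspace (bd_space r R)"
    then obtain n where "f \<in> bd_cyl r R n"
      using openin_bd_space_nbhd[OF openin_topspace] by metis
    then show "f \<in> bd_carrier r R" using bd_cyl_subset_carrier by blast
  qed
  have "ofilter r {}" by (simp add: ofilter_def)
  then obtain a where "a \<in> Field r" "underS r a = {}"
    using wo_rel.ofilter_underS_Field[OF wo, of "{}"] infinite_Field by force
  then have "({}, \<lambda>_. undefined) \<in> bd_nodes r R"
    by (auto simp: mem_bd_nodes)
  then have "bd_cyl r R ({}, \<lambda>_. undefined) \<subseteq> topspace (bd_space r R)"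
    using openin_bd_cyl openin_subset by blast
  then show "bd_carrier r R \<subseteq> topspace (bd_space r R)"
    by (simp add: bd_cyl_def)
qed

definition default_ext :: "('d, 'c) node \<Rightarrow> 'd \<Rightarrow> 'c" where
  "default_ext n =
     (\<lambda>x. if x \<in> fst n then snd n x else if x \<in> Field r then (SOME v. v \<in> R) else undefined)"

lemma default_ext_in_bd_cyl:
  assumes "n \<in> bd_nodes r R"
  shows "default_ext n \<in> bd_cyl r R n"
proof -
  have "(SOME v. v \<in> R) \<in> R" using two_values by (metis someI)
  moreover have "fst n \<subseteq> Field r" using assms underS_Field by (auto simp: mem_bd_nodes)
  ultimately show ?thesis
    using assms unfolding default_ext_def bd_cyl_def bd_carrier_def
    by (auto simp: mem_bd_nodes PiE_iff extensional_def)
qed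

lemma card_of_less_PiE: "|A| <o |A \<rightarrow>\<^sub>E R|"
proof -
  obtain u v where uv: "u \<in> R" "v \<in> R" "u \<noteq> v" using two_values by blast
  let ?chi = "\<lambda>X. \<lambda>x\<in>A. if x \<in> X then u else v"
  have "inj_on ?chi (Pow A)"
  proof (rule inj_onI)
    fix X Y assume XY: "X \<in> Pow A" "Y \<in> Pow A" "?chi X = ?chi Y"
    have "x \<in> X \<longleftrightarrow> x \<in> Y" if "x \<in> A" for x
      using fun_cong[OF XY(3), of x] that uv(3) by (auto split: if_splits)
    then show "X = Y" using XY(1,2) by blast
  qed
  moreover have "\<And>X. ?chi X \<in> A \<rightarrow>\<^sub>E R" using uv by auto
  ultimately have "|Pow A| \<le>o |A \<rightarrow>\<^sub>E R|" by (rule card_of_ordLeqI)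
  then show ?thesis using card_of_Pow ordLess_ordLeq_trans by blast
qed

lemma card_of_underS_less: "a \<in> Field r \<Longrightarrow> |underS r a| <o |Field r|"
  using card_of_underS[OF card_order] card_of_Field_ordIso[OF card_order]
    ordLess_ordIso_trans ordIso_symmetric by blast

lemma exists_underS_card_of:
  assumes "|Z| <o |Field r|"
  obtains a where "a \<in> Field r" "|Z| =o |underS r a|"
proof -
  have "|Z| <o r"
    using assms card_of_Field_ordIso[OF card_order] ordLess_ordIso_trans by blast
  then obtain a where a: "a \<in> Field r" "|Z| =o Restr r (underS r a)"
    using ordLess_iff_ordIso_Restr[OF well_order card_of_Well_order] by blast
  have "Field (Restr r (underS r a)) = underS r a"
    by (rule Field_Restr_ofilter[OF well_order wo_rel.underS_ofilter[OF wo]])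
  then have "|Z| =o |underS r a|"
    using card_of_cong[OF a(2)] by (simp add: Field_card_of)
  then show thesis using that a(1) by blast
qed

lemma card_bd_nodes_le:
  assumes le: "\<And>a. a \<in> Field r \<Longrightarrow> |underS r a \<rightarrow>\<^sub>E R| \<le>o |Z|"
  shows "|bd_nodes r R| \<le>o |Z|"
proof -
  have Field_le: "|Field r| \<le>o |Z|"
  proof (rule ccontr)
    assume "\<not> |Field r| \<le>o |Z|"
    then have "|Z| <o |Field r|" by (metis not_ordLeq_iff_ordLess card_of_Well_order)
    then obtain a where a: "a \<in> Field r" "|Z| =o |underS r a|" by (rule exists_underS_card_of)
    have "|underS r a| <o |Z|"
      using card_of_less_PiE le[OF a(1)] ordLess_ordLeq_trans by blast
    then show False using a(2) ordLess_ordIso_trans ordLess_irreflexive by blast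
  qed
  have Z: "infinite Z"
    using Field_le infinite_Field card_of_ordLeq_finite by blast
  show ?thesis
    unfolding bd_nodes_def
  proof (rule card_of_UNION_ordLeq_infinite[OF Z Field_le], intro ballI)
    fix a assume a: "a \<in> Field r"
    have "{underS r a} \<times> (underS r a \<rightarrow>\<^sub>E R) = Pair (underS r a) ` (underS r a \<rightarrow>\<^sub>E R)" by auto
    then show "|{underS r a} \<times> (underS r a \<rightarrow>\<^sub>E R)| \<le>o |Z|"
      using ordLeq_transitive[OF card_of_image le[OF a]] by simp
  qed
qed

lemma card_bd_nodes_le_base:
  assumes "is_base (bd_space r R) B"
  shows "|bd_nodes r R| \<le>o |B|"
proof (rule card_bd_nodes_le)
  fix a assume a: "a \<in> Field r"
  have node: "(underS r a, s) \<in> bd_nodes r R" if "s \<in> underS r a \<rightarrow>\<^sub>E R" for s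
    using a that by (auto simp: bd_nodes_def)
  have nbhd: "\<And>U f. openin (bd_space r R) U \<Longrightarrow> f \<in> U \<Longrightarrow> \<exists>V. V \<in> B \<and> f \<in> V \<and> V \<subseteq> U"
    using assms unfolding is_base_def openin_topology_base_unique by blast
  have "\<exists>V. V \<in> B \<and> default_ext (underS r a, s) \<in> V \<and> V \<subseteq> bd_cyl r R (underS r a, s)"
    if "s \<in> underS r a \<rightarrow>\<^sub>E R" for s
    using nbhd[OF openin_bd_cyl[OF node[OF that]] default_ext_in_bd_cyl[OF node[OF that]]] .
  then have "\<forall>s\<in>underS r a \<rightarrow>\<^sub>E R. \<exists>V. V \<in> B \<and> default_ext (underS r a, s) \<in> V \<and> V \<subseteq> bd_cyl r R (underS r a, s)"
    by blast
  then obtain V where V: "\<forall>s\<in>underS r a \<rightarrow>\<^sub>E R.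
      V s \<in> B \<and> default_ext (underS r a, s) \<in> V s \<and> V s \<subseteq> bd_cyl r R (underS r a, s)"
    by (rule bchoice[THEN exE])
  \<comment> \<open>distinct nodes of the same level have disjoint cylinders, so V is injective\<close>
  have "inj_on V (underS r a \<rightarrow>\<^sub>E R)"
  proof (rule inj_onI, rule ccontr)
    fix s t assume s: "s \<in> underS r a \<rightarrow>\<^sub>E R" and t: "t \<in> underS r a \<rightarrow>\<^sub>E R"
      and "V s = V t" "s \<noteq> t"
    then have "V s \<subseteq> bd_cyl r R (underS r a, t)"
      using V by simp
    then have "default_ext (underS r a, s) \<in> bd_cyl r R (underS r a, t)"
      using V s by blast
    moreover have "default_ext (underS r a, s) \<in> bd_cyl r R (underS r a, s)"
      using V s by blast
    moreover have "bd_cyl r R (underS r a, s) \<inter> bd_cyl r R (underS r a, t) = {}"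
      using bd_cyl_disjoint[OF node[OF s] node[OF t]] \<open>s \<noteq> t\<close> by simp
    ultimately show False by blast
  qed
  then show "|underS r a \<rightarrow>\<^sub>E R| \<le>o |B|"
    by (rule card_of_ordLeqI) (use V in blast)
qed

lemma infinite_bd_nodes: "infinite (bd_nodes r R)"
proof -
  obtain u where u: "u \<in> R" using two_values by blast
  let ?g = "\<lambda>a. (underS r a, \<lambda>x\<in>underS r a. u)"
  have "inj_on ?g (Field r)"
  proof (rule inj_onI)
    fix a b assume "a \<in> Field r" "b \<in> Field r" "?g a = ?g b"
    then show "a = b" using wo_rel.suc_underS[OF wo] by (metis prod.inject)
  qed
  moreover have "?g ` Field r \<subseteq> bd_nodes r R" using u by (auto simp: bd_nodes_def)
  ultimately show ?thesis
    using infinite_Field finite_imageD finite_subset by blast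
qed

lemma underS_mono: "c \<in> underS r h \<Longrightarrow> underS r c \<subseteq> underS r h"
  using ofilter_under_subset[OF wo_rel.underS_ofilter[OF wo]] unfolding underS_def by blast

lemma exists_upper_bound:
  assumes "a \<in> Field r" "b \<in> Field r"
  obtains c where "c \<in> Field r" "a \<in> underS r c" "b \<in> underS r c"
proof -
  have "\<exists>c\<in>Field r. a \<in> underS r c \<and> b \<in> underS r c" if ab: "(a, b) \<in> r" "a \<in> Field r" "b \<in> Field r" for a b
  proof -
    obtain c where "c \<in> Field r" "b \<in> underS r c" using exists_greater ab(3) by blast
    then show ?thesis using ofilter_under_subset[OF wo_rel.underS_ofilter[OF wo] ab(1)] by blast
  qed
  then show thesis
    using that assms wo_rel.TOTALS[OF wo] by metis
qed

lemma card_Field_le_Diff_underS: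
  assumes "l \<in> Field r"
  shows "|Field r| \<le>o |Field r - underS r l|"
proof (rule ccontr)
  assume "\<not> |Field r| \<le>o |Field r - underS r l|"
  then have "|Field r - underS r l| <o |Field r|" by (metis not_ordLeq_iff_ordLess card_of_Well_order)
  then have "|(Field r - underS r l) \<union> underS r l| <o |Field r|"
    using card_of_Un_ordLess_infinite[OF infinite_Field _ card_of_underS_less[OF assms]] by blast
  moreover have "(Field r - underS r l) \<union> underS r l = Field r"
    using Order_Relation.underS_Field[of r l] by blast
  ultimately have "|Field r| <o |Field r|" by simp
  then show False using ordLess_irreflexive by blast
qed

lemma exists_gap_embedding:
  assumes l: "l \<in> Field r" and x: "x \<in> Field r" and b: "b \<in> Field r"
  obtains h \<phi> where "h \<in> Field r" "b \<in> underS r h" "l \<in> underS r h"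
    "inj_on \<phi> (underS r x)" "\<phi> ` underS r x \<subseteq> underS r h - underS r l"
proof -
  let ?A = "Field r - underS r l"
  \<comment> \<open>the final segment ?A has the cardinality of r, so r embeds into its restriction to ?A\<close>
  have "|Field r| \<le>o |?A|" by (rule card_Field_le_Diff_underS[OF l])
  moreover have "r =o |Field r|"
    using card_of_Field_ordIso[OF card_order] ordIso_symmetric by blast
  moreover have "|?A| \<le>o Restr r ?A"
    using card_of_least Well_order_Restr[OF well_order] Refl_Field_Restr2[OF wo_rel.REFL[OF wo]]
    by (metis Diff_subset)
  ultimately have "r \<le>o Restr r ?A"
    using ordIso_ordLeq_trans ordLeq_transitive by blast
  then obtain f where f: "embed r (Restr r ?A) f" unfolding ordLeq_def by blast
  have Field_Restr: "Field (Restr r ?A) = ?A"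
    using Refl_Field_Restr2[OF wo_rel.REFL[OF wo]] by blast
  have fx: "f x \<in> ?A" using embed_Field[OF f] x Field_Restr by blast
  have "bij_betw f (underS r x) (underS (Restr r ?A) (f x))"
    by (rule embed_underS[OF well_order f x])
  moreover have "underS (Restr r ?A) (f x) \<subseteq> underS r (f x) - underS r l"
    unfolding underS_def by auto
  ultimately have f_inj: "inj_on f (underS r x)" and f_img: "f ` underS r x \<subseteq> underS r (f x) - underS r l"
    unfolding bij_betw_def by auto
  obtain c where c: "c \<in> Field r" "f x \<in> underS r c" "b \<in> underS r c"
    using exists_upper_bound fx b by blast
  obtain h where h: "h \<in> Field r" "c \<in> underS r h" "l \<in> underS r h"
    using exists_upper_bound c(1) l by blast
  have "underS r (f x) \<subseteq> underS r h"
    using underS_mono[OF c(2)] underS_mono[OF h(2)] by blast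
  then show thesis
    using that[OF h(1) _ h(3) f_inj] f_img underS_mono[OF h(2)] c(3) by blast
qed

lemma exists_refining_levels:
  assumes J: "J \<subseteq> bd_nodes r R" and \<sigma>: "\<sigma> ` J \<subseteq> Field r" and b: "b \<in> Field r"
  obtains H where "\<forall>q\<in>J. H q \<in> Field r \<and> b \<in> underS r (H q) \<and> fst q \<subseteq> underS r (H q) \<and>
    (\<exists>\<phi>. inj_on \<phi> (underS r (\<sigma> q)) \<and> \<phi> ` underS r (\<sigma> q) \<subseteq> underS r (H q) - fst q)"
proof -
  have "\<exists>H. H \<in> Field r \<and> b \<in> underS r H \<and> fst q \<subseteq> underS r H \<and>
      (\<exists>\<phi>. inj_on \<phi> (underS r (\<sigma> q)) \<and> \<phi> ` underS r (\<sigma> q) \<subseteq> underS r H - fst q)"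
    if q: "q \<in> J" for q
  proof -
    have "q \<in> bd_nodes r R" using J q by blast
    then obtain l where l: "l \<in> Field r" "fst q = underS r l" by (auto simp: mem_bd_nodes)
    have "\<sigma> q \<in> Field r" using \<sigma> q by blast
    then obtain H \<phi> where "H \<in> Field r" "b \<in> underS r H" "l \<in> underS r H"
      "inj_on \<phi> (underS r (\<sigma> q))" "\<phi> ` underS r (\<sigma> q) \<subseteq> underS r H - underS r l"
      using exists_gap_embedding[OF l(1) _ b] by blast
    then show ?thesis using l(2) underS_mono by blast
  qed
  then have "\<forall>q\<in>J. \<exists>H. H \<in> Field r \<and> b \<in> underS r H \<and> fst q \<subseteq> underS r H \<and>
      (\<exists>\<phi>. inj_on \<phi> (underS r (\<sigma> q)) \<and> \<phi> ` underS r (\<sigma> q) \<subseteq> underS r H - fst q)"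
    by blast
  then show thesis using that by (rule bchoice[THEN exE])
qed

lemma card_node_extensions_ge:
  assumes n: "n \<in> bd_nodes r R" and h: "fst n \<subseteq> underS r h"
    and \<phi>: "inj_on \<phi> A" "\<phi> ` A \<subseteq> underS r h - fst n"
  shows "|A \<rightarrow>\<^sub>E R| \<le>o |node_extensions r R n h|"
proof -
  obtain u where u: "u \<in> R" using two_values by blast
  define ext where "ext t = (underS r h, \<lambda>y. if y \<in> fst n then snd n y
      else if y \<in> \<phi> ` A then t (inv_into A \<phi> y) else if y \<in> underS r h then u else undefined)" for t
  have "inj_on ext (A \<rightarrow>\<^sub>E R)"
  proof (rule inj_onI)
    fix t t' assume t: "t \<in> A \<rightarrow>\<^sub>E R" and t': "t' \<in> A \<rightarrow>\<^sub>E R" and eq: "ext t = ext t'"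
    show "t = t'"
    proof (rule PiE_ext[OF t t'])
      fix y assume y: "y \<in> A"
      have "\<phi> y \<notin> fst n" "\<phi> y \<in> \<phi> ` A" using \<phi>(2) y by auto
      moreover have "inv_into A \<phi> (\<phi> y) = y" using inv_into_f_f[OF \<phi>(1) y] .
      moreover have "snd (ext t) (\<phi> y) = snd (ext t') (\<phi> y)" using eq by simp
      ultimately show "t y = t' y" unfolding ext_def by simp
    qed
  qed
  moreover have "ext t \<in> node_extensions r R n h" if t: "t \<in> A \<rightarrow>\<^sub>E R" for t
  proof -
    have "inv_into A \<phi> y \<in> A" if "y \<in> \<phi> ` A" for y
      using that by (simp add: inv_into_into)
    then have "snd (ext t) \<in> underS r h \<rightarrow>\<^sub>E R"
      using n t u h \<phi>(2) unfolding ext_def by (auto simp: mem_bd_nodes PiE_iff extensional_def)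
    then show ?thesis unfolding node_extensions_def ext_def by auto
  qed
  ultimately show ?thesis by (rule card_of_ordLeqI)
qed

lemma card_bd_nodes_le_UN_extensions:
  assumes J: "J \<subseteq> bd_nodes r R" and cof: "cofinal (\<sigma> ` J) r"
    and H: "\<And>q. q \<in> J \<Longrightarrow> fst q \<subseteq> underS r (H q)"
    and gap: "\<And>q. q \<in> J \<Longrightarrow>
      \<exists>\<phi>. inj_on \<phi> (underS r (\<sigma> q)) \<and> \<phi> ` underS r (\<sigma> q) \<subseteq> underS r (H q) - fst q"
  shows "|bd_nodes r R| \<le>o |\<Union>q\<in>J. node_extensions r R q (H q)|"
proof (rule card_bd_nodes_le)
  fix a assume "a \<in> Field r"
  then obtain q where q: "q \<in> J" "a \<noteq> \<sigma> q" "(a, \<sigma> q) \<in> r"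
    using cof unfolding cofinal_def by blast
  obtain \<phi> where \<phi>: "inj_on \<phi> (underS r (\<sigma> q))" "\<phi> ` underS r (\<sigma> q) \<subseteq> underS r (H q) - fst q"
    using gap[OF q(1)] by blast
  have sub: "underS r a \<subseteq> underS r (\<sigma> q)"
    using underS_mono[of a "\<sigma> q"] q(2,3) unfolding underS_def by blast
  have "\<phi> ` underS r a \<subseteq> underS r (H q) - fst q"
    using image_mono[OF sub] \<phi>(2) by (rule order_trans)
  then have "|underS r a \<rightarrow>\<^sub>E R| \<le>o |node_extensions r R q (H q)|"
    by (rule card_node_extensions_ge[OF subsetD[OF J q(1)] H[OF q(1)] inj_on_subset[OF \<phi>(1) sub]])
  also have "|node_extensions r R q (H q)| \<le>o |\<Union>q\<in>J. node_extensions r R q (H q)|"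
    by (rule card_of_mono1) (use q(1) in blast)
  finally show "|underS r a \<rightarrow>\<^sub>E R| \<le>o |\<Union>q\<in>J. node_extensions r R q (H q)|" .
qed

definition diff_node :: "('d \<Rightarrow> 'c) \<Rightarrow> 'd \<Rightarrow> 'c \<Rightarrow> ('d, 'c) node" where
  "diff_node z d v = (under r d, (restrict z (under r d))(d := v))"

lemma bd_cyl_diff_node:
  assumes "d \<in> Field r"
  shows "f \<in> bd_cyl r R (diff_node z d v) \<longleftrightarrow>
    f \<in> bd_carrier r R \<and> f d = v \<and> (\<forall>y\<in>underS r d. f y = z y)"
  using under_eq_insert[OF assms] underS_notIn[of d r]
  unfolding bd_cyl_def diff_node_def by auto

lemma diff_node_in_bd_nodes:
  assumes "z \<in> bd_carrier r R" "d \<in> Field r" "v \<in> R"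
  shows "diff_node z d v \<in> bd_nodes r R"
proof -
  have "d \<in> under r d" by (rule under_refl[OF assms(2)])
  then have "(restrict z (under r d))(d := v) \<in> under r d \<rightarrow>\<^sub>E R"
    using assms under_Field[of r d] unfolding bd_carrier_def by (auto simp: PiE_iff extensional_def)
  then show ?thesis
    using under_eq_underS[of d] unfolding diff_node_def by (auto simp: mem_bd_nodes)
qed

lemma node_le_diff_node:
  assumes n: "n \<in> bd_nodes r R" and z: "z \<in> bd_cyl r R n" and d: "d \<in> Field r" "d \<notin> fst n"
  shows "node_le n (diff_node z d v)"
proof -
  have "y \<in> under r d \<and> y \<noteq> d" if y: "y \<in> fst n" for y
  proof -
    have "y \<in> Field r" using y n Order_Relation.underS_Field by (force simp: mem_bd_nodes)
    moreover have "(d, y) \<notin> r"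
      using ofilter_under_subset[OF node_domain_ofilter[OF n] _ y] d(2) by blast
    ultimately have "(y, d) \<in> r" using wo_rel.TOTALS[OF wo] d(1) by blast
    then show ?thesis using y d(2) unfolding under_def by auto
  qed
  then show ?thesis using z unfolding node_le_def diff_node_def bd_cyl_def by auto
qed

lemma diff_node_cyl_unique:
  assumes f: "f \<in> bd_cyl r R (diff_node z d v)" "f \<in> bd_cyl r R (diff_node z d' v')"
    and d: "d \<in> Field r" "d' \<in> Field r" and v: "v \<noteq> z d" "v' \<noteq> z d'"
  shows "d = d' \<and> v = v'"
proof -
  have "f d = v" "\<forall>y\<in>underS r d. f y = z y" "f d' = v'" "\<forall>y\<in>underS r d'. f y = z y"
    using f bd_cyl_diff_node d by blast+
  moreover have "d = d' \<or> d \<in> underS r d' \<or> d' \<in> underS r d"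
    using wo_rel.TOTALS[OF wo] d unfolding underS_def by blast
  ultimately show ?thesis using v by auto
qed

lemma diff_node_inject:
  assumes "d \<in> Field r" "d' \<in> Field r" "diff_node z d v = diff_node z d' v'"
  shows "d = d' \<and> v = v'"
proof -
  have "under r d = under r d'" using assms(3) unfolding diff_node_def by simp
  then have "(d, d') \<in> r" "(d', d) \<in> r"
    using under_refl assms(1,2) unfolding under_def by blast+
  then have "d = d'" using wo_rel.ANTISYM[OF wo] unfolding antisym_def by blast
  have "v = snd (diff_node z d v) d" unfolding diff_node_def by simp
  also have "\<dots> = snd (diff_node z d' v') d" using assms(3) by simp
  also have "\<dots> = v'" using \<open>d = d'\<close> unfolding diff_node_def by simp
  finally show ?thesis using \<open>d = d'\<close> by simp
qed

text \<open>A point f of [n] either agrees with z below h, or it lies in the piece diff_node z d (f d)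
  for the least d where it does not.\<close>

definition first_diff_nodes :: "('d \<Rightarrow> 'c) \<Rightarrow> ('d, 'c) node \<Rightarrow> 'd \<Rightarrow> ('d, 'c) node set" where
  "first_diff_nodes z n h = insert (underS r h, restrict z (underS r h))
     {diff_node z d v | d v. d \<in> underS r h - fst n \<and> v \<in> R - {z d}}"

lemma first_diff_nodes_disjoint:
  assumes "p \<in> first_diff_nodes z n h" "q \<in> first_diff_nodes z n h" "p \<noteq> q"
  shows "bd_cyl r R p \<inter> bd_cyl r R q = {}"
proof -
  let ?L = "(underS r h, restrict z (underS r h))"
  have dF: "d \<in> Field r" if "d \<in> underS r h" for d using underS_Field[OF that] .
  have False if "f \<in> bd_cyl r R ?L" "f \<in> bd_cyl r R (diff_node z d v)" "d \<in> underS r h" "v \<noteq> z d"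
    for f d v
  proof -
    have "f d = z d" using that(1,3) unfolding bd_cyl_def by simp
    then show False using that(2,4) bd_cyl_diff_node[OF dF[OF that(3)]] by simp
  qed
  moreover have "d = d' \<and> v = v'"
    if "f \<in> bd_cyl r R (diff_node z d v)" "f \<in> bd_cyl r R (diff_node z d' v')"
      "d \<in> underS r h" "d' \<in> underS r h" "v \<noteq> z d" "v' \<noteq> z d'" for f d v d' v'
    using diff_node_cyl_unique[OF that(1,2) dF[OF that(3)] dF[OF that(4)] that(5,6)] .
  ultimately show ?thesis
    using assms unfolding first_diff_nodes_def by blast
qed

lemma first_diff_nodes_cover:
  assumes z: "z \<in> bd_cyl r R n" and f: "f \<in> bd_cyl r R n"
  shows "\<exists>p\<in>first_diff_nodes z n h. f \<in> bd_cyl r R p"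
proof (cases "\<forall>y\<in>underS r h. f y = z y")
  case True
  then have "f \<in> bd_cyl r R (underS r h, restrict z (underS r h))"
    using f by (auto simp: bd_cyl_def)
  then show ?thesis unfolding first_diff_nodes_def by blast
next
  case False
  let ?B = "{y \<in> underS r h. f y \<noteq> z y}"
  let ?d = "wo_rel.minim r ?B"
  have B: "?B \<subseteq> Field r" "?B \<noteq> {}"
    using False Order_Relation.underS_Field[of r h] by blast+
  have d: "?d \<in> ?B" and d_min: "\<And>y. y \<in> ?B \<Longrightarrow> (?d, y) \<in> r"
    using wo_rel.minim_in[OF wo B] wo_rel.minim_least[OF wo B(1)] by blast+
  have dF: "?d \<in> Field r" using d B(1) by blast
  have "?d \<notin> fst n" using d f z unfolding bd_cyl_def by auto
  moreover have "f ?d \<in> R" using dF f unfolding bd_cyl_def bd_carrier_def by auto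
  moreover have "f y = z y" if "y \<in> underS r ?d" for y
  proof -
    have "y \<in> underS r h" using underS_mono that d by blast
    moreover have "(?d, y) \<notin> r"
      using that wo_rel.ANTISYM[OF wo] unfolding underS_def antisym_def by blast
    ultimately show ?thesis using d_min by blast
  qed
  ultimately have "f \<in> bd_cyl r R (diff_node z ?d (f ?d))"
    and "diff_node z ?d (f ?d) \<in> first_diff_nodes z n h"
    using bd_cyl_diff_node[OF dF] d f unfolding bd_cyl_def first_diff_nodes_def by auto
  then show ?thesis by blast
qed

lemma node_partition_first_diff:
  assumes n: "n \<in> bd_nodes r R" and z: "z \<in> bd_cyl r R n"
    and h: "h \<in> Field r" "fst n \<subseteq> underS r h"
  shows "node_partition r R n (first_diff_nodes z n h)"
proof -
  have zR: "z \<in> bd_carrier r R" using z by (simp add: bd_cyl_def)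
  have dF: "d \<in> Field r" if "d \<in> underS r h" for d using underS_Field[OF that] .
  have "restrict z (underS r h) \<in> underS r h \<rightarrow>\<^sub>E R"
    using zR dF unfolding bd_carrier_def by auto
  then have "(underS r h, restrict z (underS r h)) \<in> bd_nodes r R"
    using h(1) unfolding bd_nodes_def by blast
  moreover have "node_le n (underS r h, restrict z (underS r h))"
    using h(2) z unfolding node_le_def bd_cyl_def by auto
  moreover have "diff_node z d v \<in> bd_nodes r R \<and> node_le n (diff_node z d v)"
    if "d \<in> underS r h - fst n" "v \<in> R" for d v
    using diff_node_in_bd_nodes[OF zR] node_le_diff_node[OF n z] dF that by blast
  ultimately have nodes: "first_diff_nodes z n h \<subseteq> bd_nodes r R"
    and le: "\<forall>p\<in>first_diff_nodes z n h. node_le n p"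
    unfolding first_diff_nodes_def by blast+
  show ?thesis
    unfolding node_partition_def
  proof (intro conjI nodes le ballI impI)
    show "bd_cyl r R p \<inter> bd_cyl r R q = {}"
      if "p \<in> first_diff_nodes z n h" "q \<in> first_diff_nodes z n h" "p \<noteq> q" for p q
      using first_diff_nodes_disjoint[OF that] .
    show "bd_cyl r R n \<subseteq> (\<Union>p\<in>first_diff_nodes z n h. bd_cyl r R p)"
      using first_diff_nodes_cover[OF z] by blast
  qed
qed

lemma card_first_diff_nodes_ge_R:
  assumes R: "infinite R" and n: "fst n = underS r a0" and h: "a0 \<in> underS r h"
  shows "|R| \<le>o |first_diff_nodes z n h|"
proof -
  have a0: "a0 \<in> Field r" using underS_Field[OF h] .
  have "|R| =o |R - {z a0}|"
    using infinite_imp_bij_betw[of R "z a0"] R card_of_ordIso by blast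
  moreover have "|R - {z a0}| \<le>o |first_diff_nodes z n h|"
  proof (rule card_of_ordLeqI)
    show "inj_on (diff_node z a0) (R - {z a0})"
      using diff_node_inject a0 by (auto intro: inj_onI)
    show "diff_node z a0 v \<in> first_diff_nodes z n h" if "v \<in> R - {z a0}" for v
      using that n h underS_notIn unfolding first_diff_nodes_def by fastforce
  qed
  ultimately show ?thesis using ordIso_ordLeq_trans by blast
qed

lemma card_first_diff_nodes_ge_underS:
  assumes n: "fst n = underS r a0" and a0: "a0 \<in> Field r" and x: "x \<in> Field r"
  obtains h where "h \<in> Field r" "a0 \<in> underS r h" "|underS r x| \<le>o |first_diff_nodes z n h|"
proof -
  obtain h \<phi> where h: "h \<in> Field r" "a0 \<in> underS r h" "a0 \<in> underS r h"
    and \<phi>: "inj_on \<phi> (underS r x)" "\<phi> ` underS r x \<subseteq> underS r h - underS r a0"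
    by (rule exists_gap_embedding[OF a0 x a0])
  have "\<forall>d. \<exists>v. v \<in> R \<and> v \<noteq> z d" using two_values by blast
  then obtain vf where vf: "\<forall>d. vf d \<in> R \<and> vf d \<noteq> z d" by (rule choice[THEN exE])
  have "|underS r x| \<le>o |first_diff_nodes z n h|"
  proof (rule card_of_ordLeqI)
    show "inj_on (\<lambda>y. diff_node z (\<phi> y) (vf (\<phi> y))) (underS r x)"
    proof (rule inj_onI)
      fix y y' assume y: "y \<in> underS r x" "y' \<in> underS r x"
        and eq: "diff_node z (\<phi> y) (vf (\<phi> y)) = diff_node z (\<phi> y') (vf (\<phi> y'))"
      have "underS r h \<subseteq> Field r" by (rule Order_Relation.underS_Field)
      then have "\<phi> y \<in> Field r" "\<phi> y' \<in> Field r" using \<phi>(2) y by blast+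
      then have "\<phi> y = \<phi> y'" using diff_node_inject eq by blast
      then show "y = y'" using \<phi>(1) y unfolding inj_on_def by blast
    qed
    show "diff_node z (\<phi> y) (vf (\<phi> y)) \<in> first_diff_nodes z n h" if "y \<in> underS r x" for y
      using vf \<phi>(2) that n unfolding first_diff_nodes_def by blast
  qed
  then show thesis using that h(1,2) by blast
qed

end

lemma weight_le_bd_space_iff:
  assumes X: "bd_power r R" and Y: "bd_power r' R'"
  shows "weight_le (bd_space r R) (bd_space r' R') \<longleftrightarrow> |bd_nodes r R| \<le>o |bd_nodes r' R'|"
proof
  assume "weight_le (bd_space r R) (bd_space r' R')"
  then obtain B where B: "is_base (bd_space r R) B" "|B| \<le>o |bd_basic r' R'|"
    unfolding weight_le_def using bd_power.is_base_bd_basic[OF Y] by blast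
  have "|bd_nodes r R| \<le>o |B|" using bd_power.card_bd_nodes_le_base[OF X B(1)] .
  also have "|B| \<le>o |bd_basic r' R'|" by (rule B(2))
  also have "|bd_basic r' R'| \<le>o |bd_nodes r' R'|" by (rule card_bd_basic_le)
  finally show "|bd_nodes r R| \<le>o |bd_nodes r' R'|" .
next
  assume le: "|bd_nodes r R| \<le>o |bd_nodes r' R'|"
  show "weight_le (bd_space r R) (bd_space r' R')"
    unfolding weight_le_def
  proof (intro allI impI)
    fix B' assume B': "is_base (bd_space r' R') B'"
    have "|bd_basic r R| \<le>o |bd_nodes r R|" by (rule card_bd_basic_le)
    also have "|bd_nodes r R| \<le>o |bd_nodes r' R'|" by (rule le)
    also have "|bd_nodes r' R'| \<le>o |B'|" using bd_power.card_bd_nodes_le_base[OF Y B'] .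
    finally show "\<exists>B. is_base (bd_space r R) B \<and> |B| \<le>o |B'|"
      using bd_power.is_base_bd_basic[OF X] by blast
  qed
qed

lemma same_weight_bd_space_iff:
  assumes "bd_power r R" "bd_power r' R'"
  shows "same_weight (bd_space r R) (bd_space r' R') \<longleftrightarrow> |bd_nodes r R| =o |bd_nodes r' R'|"
  using weight_le_bd_space_iff[OF assms] weight_le_bd_space_iff[OF assms(2,1)]
  unfolding same_weight_def ordIso_iff_ordLeq by simp

section \<open>Splitting basic sets\<close>

text \<open>The assumption room makes every basic set split into at least \<kappa> basic sets. It cannot be
  dropped: the Cantor space ^\<omega>2 and the Baire space ^\<omega>\<omega> have the same weight, but only
  the former is compact.\<close>

locale bd_power_cf = bd_power r R for r :: "'d rel" and R :: "'c set" +
  fixes kappa :: "'k rel"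
  assumes card_order_kappa: "Card_order kappa" and infinite_kappa: "infinite (Field kappa)"
    and cf: "cf_eq r kappa"
    and room: "(infinite R \<and> |Field kappa| \<le>o |R| ) \<or> |Field kappa| <o |Field r|"
begin

lemma card_first_diff_nodes:
  assumes n: "n \<in> bd_nodes r R"
  obtains h where "h \<in> Field r" "fst n \<subseteq> underS r h" "|Field kappa| \<le>o |first_diff_nodes z n h|"
proof -
  obtain a0 where a0: "a0 \<in> Field r" "fst n = underS r a0" using n by (auto simp: mem_bd_nodes)
  have "\<exists>h\<in>Field r. a0 \<in> underS r h \<and> |Field kappa| \<le>o |first_diff_nodes z n h|"
    using room
  proof
    assume R: "infinite R \<and> |Field kappa| \<le>o |R|"
    obtain h where h: "h \<in> Field r" "a0 \<in> underS r h" using exists_greater a0(1) by blast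
    have "|Field kappa| \<le>o |first_diff_nodes z n h|"
      using ordLeq_transitive[OF conjunct2[OF R] card_first_diff_nodes_ge_R[OF conjunct1[OF R] a0(2) h(2)]] .
    then show ?thesis using h by blast
  next
    assume "|Field kappa| <o |Field r|"
    then obtain x where x: "x \<in> Field r" "|Field kappa| =o |underS r x|"
      by (rule exists_underS_card_of)
    obtain h where h: "h \<in> Field r" "a0 \<in> underS r h" "|underS r x| \<le>o |first_diff_nodes z n h|"
      by (rule card_first_diff_nodes_ge_underS[OF a0(2,1) x(1)])
    then show ?thesis using ordIso_ordLeq_trans[OF x(2) h(3)] by blast
  qed
  then show thesis using that underS_mono a0(2) by blast
qed

lemma exists_node_partition:
  assumes n: "n \<in> bd_nodes r R" and b: "b \<in> Field r"
  obtains P where "node_partition r R n P" "\<forall>p\<in>P. b \<in> fst p" "|P| =o |bd_nodes r R|"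
proof -
  define z where "z = default_ext n"
  have z: "z \<in> bd_cyl r R n" unfolding z_def by (rule default_ext_in_bd_cyl[OF n])
  obtain K where K: "K \<subseteq> Field r" "cofinal K r" "|K| =o kappa"
    using cf unfolding cf_eq_def by blast
  obtain h where h: "h \<in> Field r" "fst n \<subseteq> underS r h"
    and J_large: "|Field kappa| \<le>o |first_diff_nodes z n h|"
    by (rule card_first_diff_nodes[OF n])
  let ?J = "first_diff_nodes z n h"
  have J: "node_partition r R n ?J" by (rule node_partition_first_diff[OF n z h])
  have "|K| =o |Field kappa|"
    using K(3) card_of_Field_ordIso[OF card_order_kappa] ordIso_transitive ordIso_symmetric by blast
  then have "|K| \<le>o |?J|" using J_large ordIso_ordLeq_trans by blast
  moreover have "K \<noteq> {}" using K(2) b unfolding cofinal_def by blast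
  ultimately obtain \<sigma> where \<sigma>: "\<sigma> ` ?J = K" using card_of_ordLeq2[of K ?J] by blast
  \<comment> \<open>refine each piece q at a level H q with room for a copy of underS r (\<sigma> q);
    as \<sigma> q runs through a cofinal set, this produces |bd_nodes r R| pieces\<close>
  have \<sigma>_Field: "\<sigma> ` ?J \<subseteq> Field r" using \<sigma> K(1) by simp
  obtain H where H: "\<forall>q\<in>?J. H q \<in> Field r \<and> b \<in> underS r (H q) \<and> fst q \<subseteq> underS r (H q) \<and>
      (\<exists>\<phi>. inj_on \<phi> (underS r (\<sigma> q)) \<and> \<phi> ` underS r (\<sigma> q) \<subseteq> underS r (H q) - fst q)"
    by (rule exists_refining_levels[OF node_partitionD(1)[OF J] \<sigma>_Field b])
  have H_Field: "H q \<in> Field r" and H_b: "b \<in> underS r (H q)" and H_dom: "fst q \<subseteq> underS r (H q)"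
    and H_gap: "\<exists>\<phi>. inj_on \<phi> (underS r (\<sigma> q)) \<and> \<phi> ` underS r (\<sigma> q) \<subseteq> underS r (H q) - fst q"
    if "q \<in> ?J" for q
    using H that by blast+
  define P where "P = (\<Union>q\<in>?J. node_extensions r R q (H q))"
  have P: "node_partition r R n P"
    unfolding P_def
  proof (rule node_partition_UN[OF J])
    fix q assume q: "q \<in> ?J"
    show "node_partition r R q (node_extensions r R q (H q))"
      by (rule node_partition_extensions[OF H_Field[OF q] H_dom[OF q]])
  qed
  moreover have "\<forall>p\<in>P. b \<in> fst p" using H_b unfolding P_def node_extensions_def by auto
  moreover have "|bd_nodes r R| \<le>o |P|"
    unfolding P_def
    by (rule card_bd_nodes_le_UN_extensions[OF node_partitionD(1)[OF J], where \<sigma> = \<sigma>])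
      (simp_all add: \<sigma> K(2) H_dom H_gap)
  moreover have "|P| \<le>o |bd_nodes r R|"
    using card_of_mono1[OF node_partitionD(1)[OF P]] .
  ultimately show thesis using that by (simp add: ordIso_iff_ordLeq)
qed

lemma node_Union_in_bd_nodes:
  assumes I: "|I| <o kappa" and N: "\<And>i. i \<in> I \<Longrightarrow> N i \<in> bd_nodes r R"
  shows "node_Union I N \<in> bd_nodes r R"
proof -
  have dom: "fst (node_Union I N) = (\<Union>i\<in>I. fst (N i))" by (simp add: node_Union_def)
  have "ofilter r (fst (node_Union I N))"
    unfolding dom by (rule wo_rel.ofilter_UNION[OF wo]) (use N node_domain_ofilter in blast)
  moreover have "fst (node_Union I N) \<noteq> Field r"
  proof
    assume full: "fst (node_Union I N) = Field r"
    have "\<forall>i\<in>I. \<exists>a. a \<in> Field r \<and> fst (N i) = underS r a"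
    proof
      fix i assume "i \<in> I"
      then show "\<exists>a. a \<in> Field r \<and> fst (N i) = underS r a"
        using N[of i] unfolding mem_bd_nodes by blast
    qed
    then obtain a where a: "\<forall>i\<in>I. a i \<in> Field r \<and> fst (N i) = underS r (a i)"
      by (rule bchoice[THEN exE])
    \<comment> \<open>fewer than cf(r) bounds a i would be cofinal\<close>
    have "cofinal (a ` I) r"
      unfolding cofinal_def
    proof
      fix y assume "y \<in> Field r"
      then obtain i where "i \<in> I" "y \<in> fst (N i)" using full dom by blast
      then show "\<exists>b\<in>a ` I. y \<noteq> b \<and> (y, b) \<in> r" using a unfolding underS_def by blast
    qed
    then have "kappa \<le>o |a ` I|" using cf a unfolding cf_eq_def by blast
    then have "kappa <o kappa"
      using ordLeq_ordLess_trans[OF ordLeq_transitive[OF _ card_of_image] I] by blast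
    then show False using ordLess_irreflexive by blast
  qed
  ultimately obtain b where "b \<in> Field r" "fst (node_Union I N) = underS r b"
    using wo_rel.ofilter_underS_Field[OF wo] by blast
  moreover have "snd (node_Union I N) \<in> fst (node_Union I N) \<rightarrow>\<^sub>E R"
    by (rule node_Union_PiE) (use N in \<open>auto simp: mem_bd_nodes\<close>)
  ultimately show ?thesis by (auto simp: mem_bd_nodes)
qed

end

section \<open>The homeomorphism with a power of \<kappa>\<close>

locale bd_power_homeo = bd_power_cf r R kappa
  for r :: "'d rel" and R :: "'c set" and kappa :: "'k rel" +
  fixes W :: "'w set"
  assumes card_W: "|W| =o |bd_nodes r R|"
begin

sublocale kW: bd_power kappa W
proof
  have "infinite W"
    using card_of_ordIso_finite[OF card_W] infinite_bd_nodes by blast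
  then show "\<exists>u v. u \<in> W \<and> v \<in> W \<and> u \<noteq> v" by (rule infinite_imp_two_elements)
qed (rule card_order_kappa infinite_kappa)+

definition split_node :: "('d, 'c) node \<Rightarrow> 'd \<Rightarrow> 'w \<Rightarrow> ('d, 'c) node" where
  "split_node n b = (SOME \<iota>. inj_on \<iota> W \<and> node_partition r R n (\<iota> ` W) \<and> (\<forall>w\<in>W. b \<in> fst (\<iota> w)))"

lemma split_node:
  assumes "n \<in> bd_nodes r R" "b \<in> Field r"
  shows "inj_on (split_node n b) W" "node_partition r R n (split_node n b ` W)"
    "\<And>w. w \<in> W \<Longrightarrow> b \<in> fst (split_node n b w)"
proof -
  obtain P where P: "node_partition r R n P" "\<forall>p\<in>P. b \<in> fst p" "|P| =o |bd_nodes r R|"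
    using exists_node_partition[OF assms] by blast
  have "|W| =o |P|" using ordIso_transitive[OF card_W ordIso_symmetric[OF P(3)]] .
  then obtain \<iota> where "bij_betw \<iota> W P" using card_of_ordIso by blast
  then have "\<exists>\<iota>. inj_on \<iota> W \<and> node_partition r R n (\<iota> ` W) \<and> (\<forall>w\<in>W. b \<in> fst (\<iota> w))"
    using P unfolding bij_betw_def by blast
  then have "inj_on (split_node n b) W \<and> node_partition r R n (split_node n b ` W) \<and>
      (\<forall>w\<in>W. b \<in> fst (split_node n b w))"
    unfolding split_node_def by (rule someI_ex)
  then show "inj_on (split_node n b) W" "node_partition r R n (split_node n b ` W)"
    "\<And>w. w \<in> W \<Longrightarrow> b \<in> fst (split_node n b w)" by blast+
qed

definition cof_seq :: "'k \<Rightarrow> 'd" where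
  "cof_seq = (SOME c. c ` Field kappa \<subseteq> Field r \<and> (\<forall>a\<in>Field r. \<exists>\<xi>\<in>Field kappa. (a, c \<xi>) \<in> r))"

lemma cof_seq: "cof_seq ` Field kappa \<subseteq> Field r" "\<And>a. a \<in> Field r \<Longrightarrow> \<exists>\<xi>\<in>Field kappa. (a, cof_seq \<xi>) \<in> r"
proof -
  obtain K where K: "K \<subseteq> Field r" "cofinal K r" "|K| =o kappa"
    using cf unfolding cf_eq_def by blast
  obtain a where "a \<in> Field r" using infinite_Field by fastforce
  then have "K \<noteq> {}" using K(2) unfolding cofinal_def by blast
  moreover have "|K| \<le>o |Field kappa|"
    using ordIso_transitive[OF K(3) ordIso_symmetric[OF card_of_Field_ordIso[OF card_order_kappa]]]
    by (simp add: ordIso_iff_ordLeq)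
  ultimately have "\<exists>c. c ` Field kappa = K" using card_of_ordLeq2[of K "Field kappa"] by simp
  then obtain c where c: "c ` Field kappa = K" by blast
  have "\<forall>a\<in>Field r. \<exists>\<xi>\<in>Field kappa. (a, c \<xi>) \<in> r"
  proof
    fix a assume a: "a \<in> Field r"
    obtain k where k: "k \<in> K" "a \<noteq> k" "(a, k) \<in> r" using K(2) a unfolding cofinal_def by blast
    then have "k \<in> c ` Field kappa" using c by simp
    then obtain \<xi> where "\<xi> \<in> Field kappa" "k = c \<xi>" by (rule imageE)
    then show "\<exists>\<xi>\<in>Field kappa. (a, c \<xi>) \<in> r" using k(3) by blast
  qed
  moreover have "c ` Field kappa \<subseteq> Field r" using c K(1) by simp
  ultimately have "\<exists>c. c ` Field kappa \<subseteq> Field r \<and> (\<forall>a\<in>Field r. \<exists>\<xi>\<in>Field kappa. (a, c \<xi>) \<in> r)"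
    by blast
  then have "cof_seq ` Field kappa \<subseteq> Field r \<and> (\<forall>a\<in>Field r. \<exists>\<xi>\<in>Field kappa. (a, cof_seq \<xi>) \<in> r)"
    unfolding cof_seq_def by (rule someI_ex)
  then show "cof_seq ` Field kappa \<subseteq> Field r" "\<And>a. a \<in> Field r \<Longrightarrow> \<exists>\<xi>\<in>Field kappa. (a, cof_seq \<xi>) \<in> r"
    by blast+
qed

text \<open>branch_node \<xi> t, for t \<in> under kappa \<xi> \<rightarrow> W, is the piece with index t \<xi> in the splitting
  of the union of the nodes chosen along t below \<xi>.\<close>

definition branch_step ::
  "('k \<Rightarrow> ('k \<Rightarrow> 'w) \<Rightarrow> ('d, 'c) node) \<Rightarrow> 'k \<Rightarrow> ('k \<Rightarrow> 'w) \<Rightarrow> ('d, 'c) node" where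
  "branch_step M \<xi> t = split_node
     (node_Union (underS kappa \<xi>) (\<lambda>\<zeta>. M \<zeta> (restrict t (under kappa \<zeta>)))) (cof_seq \<xi>) (t \<xi>)"

definition branch_node :: "'k \<Rightarrow> ('k \<Rightarrow> 'w) \<Rightarrow> ('d, 'c) node" where
  "branch_node = wo_rel.worec kappa branch_step"

definition stem :: "'k \<Rightarrow> ('k \<Rightarrow> 'w) \<Rightarrow> ('d, 'c) node" where
  "stem \<xi> t = node_Union (underS kappa \<xi>) (\<lambda>\<zeta>. branch_node \<zeta> (restrict t (under kappa \<zeta>)))"

lemma branch_node_eq: "branch_node \<xi> t = split_node (stem \<xi> t) (cof_seq \<xi>) (t \<xi>)"
proof -
  have "wo_rel.adm_wo kappa branch_step"
    unfolding wo_rel.adm_wo_def[OF kW.wo]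
  proof (intro allI impI)
    fix f g :: "'k \<Rightarrow> ('k \<Rightarrow> 'w) \<Rightarrow> ('d, 'c) node" and \<xi>
    assume "\<forall>\<zeta>\<in>underS kappa \<xi>. f \<zeta> = g \<zeta>"
    then have "node_Union (underS kappa \<xi>) (\<lambda>\<zeta>. f \<zeta> (restrict t (under kappa \<zeta>))) =
        node_Union (underS kappa \<xi>) (\<lambda>\<zeta>. g \<zeta> (restrict t (under kappa \<zeta>)))" for t
      by (intro node_Union_cong) simp
    then show "branch_step f \<xi> = branch_step g \<xi>"
      unfolding branch_step_def by (simp add: fun_eq_iff)
  qed
  then have "branch_node = branch_step branch_node"
    unfolding branch_node_def by (rule wo_rel.worec_fixpoint[OF kW.wo])
  from fun_cong[OF fun_cong[OF this, of \<xi>], of t] show ?thesis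
    unfolding branch_step_def stem_def .
qed

lemma stem_cong:
  assumes "\<And>y. y \<in> underS kappa \<xi> \<Longrightarrow> t y = t' y"
  shows "stem \<xi> t = stem \<xi> t'"
  unfolding stem_def
proof (rule node_Union_cong)
  fix \<zeta> assume "\<zeta> \<in> underS kappa \<xi>"
  then have "restrict t (under kappa \<zeta>) = restrict t' (under kappa \<zeta>)"
    using assms kW.under_subset_underS by (auto simp: fun_eq_iff restrict_def)
  then show "branch_node \<zeta> (restrict t (under kappa \<zeta>)) = branch_node \<zeta> (restrict t' (under kappa \<zeta>))"
    by simp
qed

definition branch_invariant :: "'k \<Rightarrow> ('k \<Rightarrow> 'w) \<Rightarrow> bool" where
  "branch_invariant \<xi> t \<longleftrightarrow> branch_node \<xi> t \<in> bd_nodes r R \<and> cof_seq \<xi> \<in> fst (branch_node \<xi> t) \<and>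
     (\<forall>\<zeta>\<in>underS kappa \<xi>. node_le (branch_node \<zeta> (restrict t (under kappa \<zeta>))) (branch_node \<xi> t))"

lemma stem_props:
  assumes \<xi>: "\<xi> \<in> Field kappa" and t: "t \<in> under kappa \<xi> \<rightarrow>\<^sub>E W"
    and IH: "\<And>\<zeta> s. \<zeta> \<in> underS kappa \<xi> \<Longrightarrow> s \<in> under kappa \<zeta> \<rightarrow>\<^sub>E W \<Longrightarrow> branch_invariant \<zeta> s"
  shows "stem \<xi> t \<in> bd_nodes r R"
    and "\<And>\<zeta>. \<zeta> \<in> underS kappa \<xi> \<Longrightarrow> node_le (branch_node \<zeta> (restrict t (under kappa \<zeta>))) (stem \<xi> t)"
proof -
  let ?N = "\<lambda>\<zeta>. branch_node \<zeta> (restrict t (under kappa \<zeta>))"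
  have inv: "branch_invariant \<zeta> (restrict t (under kappa \<zeta>))" if "\<zeta> \<in> underS kappa \<xi>" for \<zeta>
    using IH[OF that kW.restrict_under_PiE[OF t kW.underS_less[OF that]]] .
  have below: "node_le (?N \<zeta>) (?N \<eta>)" if "\<zeta> \<in> underS kappa \<eta>" "\<eta> \<in> underS kappa \<xi>" for \<zeta> \<eta>
  proof -
    have "node_le (branch_node \<zeta> (restrict (restrict t (under kappa \<eta>)) (under kappa \<zeta>))) (?N \<eta>)"
      using inv[OF that(2)] that(1) unfolding branch_invariant_def by blast
    then show ?thesis unfolding kW.restrict_restrict_under[OF kW.underS_less[OF that(1)]] .
  qed
  have chain: "node_le (?N \<zeta>) (?N \<eta>) \<or> node_le (?N \<eta>) (?N \<zeta>)"
    if "\<zeta> \<in> underS kappa \<xi>" "\<eta> \<in> underS kappa \<xi>" for \<zeta> \<eta>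
  proof -
    have "\<zeta> = \<eta> \<or> \<zeta> \<in> underS kappa \<eta> \<or> \<eta> \<in> underS kappa \<zeta>"
      using wo_rel.TOTALS[OF kW.wo] underS_Field[OF that(1)] underS_Field[OF that(2)]
      unfolding underS_def by blast
    then show ?thesis using below that node_le_refl by blast
  qed
  show "stem \<xi> t \<in> bd_nodes r R"
    unfolding stem_def
    by (rule node_Union_in_bd_nodes[OF card_of_underS[OF card_order_kappa \<xi>]])
      (use inv in \<open>simp add: branch_invariant_def\<close>)
  show "node_le (?N \<zeta>) (stem \<xi> t)" if "\<zeta> \<in> underS kappa \<xi>" for \<zeta>
    unfolding stem_def by (rule node_Union_upper[OF chain that])
qed

lemma branch_invariant_step:
  assumes \<xi>: "\<xi> \<in> Field kappa" and t: "t \<in> under kappa \<xi> \<rightarrow>\<^sub>E W"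
    and IH: "\<And>\<zeta> s. \<zeta> \<in> underS kappa \<xi> \<Longrightarrow> s \<in> under kappa \<zeta> \<rightarrow>\<^sub>E W \<Longrightarrow> branch_invariant \<zeta> s"
  shows "branch_invariant \<xi> t"
proof -
  have stem: "stem \<xi> t \<in> bd_nodes r R" by (rule stem_props(1)[OF \<xi> t IH])
  have cof: "cof_seq \<xi> \<in> Field r" using cof_seq(1) \<xi> by blast
  have w: "t \<xi> \<in> W" using t kW.under_eq_insert[OF \<xi>] by blast
  then have "branch_node \<xi> t \<in> split_node (stem \<xi> t) (cof_seq \<xi>) ` W"
    unfolding branch_node_eq by blast
  then have node: "branch_node \<xi> t \<in> bd_nodes r R" and le: "node_le (stem \<xi> t) (branch_node \<xi> t)"
    using node_partitionD(1,2)[OF split_node(2)[OF stem cof]] by blast+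
  have "cof_seq \<xi> \<in> fst (branch_node \<xi> t)"
    unfolding branch_node_eq by (rule split_node(3)[OF stem cof w])
  moreover have "node_le (branch_node \<zeta> (restrict t (under kappa \<zeta>))) (branch_node \<xi> t)"
    if "\<zeta> \<in> underS kappa \<xi>" for \<zeta>
    using node_le_trans[OF stem_props(2)[OF \<xi> t IH that] le] .
  ultimately show ?thesis unfolding branch_invariant_def using node by blast
qed

lemma branch_invariant: "\<xi> \<in> Field kappa \<Longrightarrow> t \<in> under kappa \<xi> \<rightarrow>\<^sub>E W \<Longrightarrow> branch_invariant \<xi> t"
proof (induction \<xi> arbitrary: t rule: kW.underS_induct)
  case (less \<xi>)
  then show ?case using branch_invariant_step by blast
qed

lemma branch_node_in_bd_nodes:
  "\<xi> \<in> Field kappa \<Longrightarrow> t \<in> under kappa \<xi> \<rightarrow>\<^sub>E W \<Longrightarrow> branch_node \<xi> t \<in> bd_nodes r R"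
  using branch_invariant unfolding branch_invariant_def by blast

lemma cof_seq_in_branch_node:
  "\<xi> \<in> Field kappa \<Longrightarrow> t \<in> under kappa \<xi> \<rightarrow>\<^sub>E W \<Longrightarrow> cof_seq \<xi> \<in> fst (branch_node \<xi> t)"
  using branch_invariant unfolding branch_invariant_def by blast

lemma branch_node_mono:
  "\<xi> \<in> Field kappa \<Longrightarrow> t \<in> under kappa \<xi> \<rightarrow>\<^sub>E W \<Longrightarrow> \<zeta> \<in> underS kappa \<xi> \<Longrightarrow>
    node_le (branch_node \<zeta> (restrict t (under kappa \<zeta>))) (branch_node \<xi> t)"
  using branch_invariant unfolding branch_invariant_def by blast

lemma stem_in_bd_nodes:
  assumes "\<xi> \<in> Field kappa" "t \<in> under kappa \<xi> \<rightarrow>\<^sub>E W"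
  shows "stem \<xi> t \<in> bd_nodes r R"
proof (rule stem_props(1)[OF assms])
  fix \<zeta> s assume "\<zeta> \<in> underS kappa \<xi>" "s \<in> under kappa \<zeta> \<rightarrow>\<^sub>E W"
  then show "branch_invariant \<zeta> s" by (rule branch_invariant[OF underS_Field])
qed

lemma branch_node_unique_step:
  assumes \<xi>: "\<xi> \<in> Field kappa" and t1: "t1 \<in> under kappa \<xi> \<rightarrow>\<^sub>E W" and t2: "t2 \<in> under kappa \<xi> \<rightarrow>\<^sub>E W"
    and f: "f \<in> bd_cyl r R (branch_node \<xi> t1)" "f \<in> bd_cyl r R (branch_node \<xi> t2)"
    and IH: "\<And>\<zeta> s1 s2. \<zeta> \<in> underS kappa \<xi> \<Longrightarrow> s1 \<in> under kappa \<zeta> \<rightarrow>\<^sub>E W \<Longrightarrow> s2 \<in> under kappa \<zeta> \<rightarrow>\<^sub>E W \<Longrightarrow>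
      f \<in> bd_cyl r R (branch_node \<zeta> s1) \<Longrightarrow> f \<in> bd_cyl r R (branch_node \<zeta> s2) \<Longrightarrow> s1 = s2"
  shows "t1 = t2"
proof -
  have below: "t1 \<zeta> = t2 \<zeta>" if \<zeta>: "\<zeta> \<in> underS kappa \<xi>" for \<zeta>
  proof -
    have lt: "(\<zeta>, \<xi>) \<in> kappa" by (rule kW.underS_less[OF \<zeta>])
    have "f \<in> bd_cyl r R (branch_node \<zeta> (restrict t1 (under kappa \<zeta>)))"
      using bd_cyl_antimono[OF branch_node_mono[OF \<xi> t1 \<zeta>]] f(1) by blast
    moreover have "f \<in> bd_cyl r R (branch_node \<zeta> (restrict t2 (under kappa \<zeta>)))"
      using bd_cyl_antimono[OF branch_node_mono[OF \<xi> t2 \<zeta>]] f(2) by blast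
    ultimately have "restrict t1 (under kappa \<zeta>) = restrict t2 (under kappa \<zeta>)"
      using IH[OF \<zeta> kW.restrict_under_PiE[OF t1 lt] kW.restrict_under_PiE[OF t2 lt]] by blast
    then show ?thesis using kW.under_refl[OF underS_Field[OF \<zeta>]] by (metis restrict_apply')
  qed
  then have stem_eq: "stem \<xi> t1 = stem \<xi> t2" by (rule stem_cong)
  have "t1 \<xi> = t2 \<xi>"
  proof (rule ccontr)
    assume ne: "t1 \<xi> \<noteq> t2 \<xi>"
    let ?s = "stem \<xi> t1"
    have s: "?s \<in> bd_nodes r R" by (rule stem_in_bd_nodes[OF \<xi> t1])
    have c: "cof_seq \<xi> \<in> Field r" using cof_seq(1) \<xi> by blast
    have w: "t1 \<xi> \<in> W" "t2 \<xi> \<in> W" using t1 t2 kW.under_refl[OF \<xi>] by blast+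
    have b1: "branch_node \<xi> t1 = split_node ?s (cof_seq \<xi>) (t1 \<xi>)" by (rule branch_node_eq)
    have b2: "branch_node \<xi> t2 = split_node ?s (cof_seq \<xi>) (t2 \<xi>)" using stem_eq branch_node_eq by simp
    have "split_node ?s (cof_seq \<xi>) (t1 \<xi>) \<noteq> split_node ?s (cof_seq \<xi>) (t2 \<xi>)"
      using inj_onD[OF split_node(1)[OF s c] _ w] ne by blast
    then have "bd_cyl r R (branch_node \<xi> t1) \<inter> bd_cyl r R (branch_node \<xi> t2) = {}"
      unfolding b1 b2 using node_partitionD(3)[OF split_node(2)[OF s c]] w by blast
    then show False using f by blast
  qed
  show "t1 = t2"
  proof (rule PiE_ext[OF t1 t2])
    fix y assume "y \<in> under kappa \<xi>"
    then show "t1 y = t2 y" using below \<open>t1 \<xi> = t2 \<xi>\<close> kW.under_eq_insert[OF \<xi>] by auto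
  qed
qed

lemma branch_node_unique:
  "\<xi> \<in> Field kappa \<Longrightarrow> t1 \<in> under kappa \<xi> \<rightarrow>\<^sub>E W \<Longrightarrow> t2 \<in> under kappa \<xi> \<rightarrow>\<^sub>E W \<Longrightarrow>
    f \<in> bd_cyl r R (branch_node \<xi> t1) \<Longrightarrow> f \<in> bd_cyl r R (branch_node \<xi> t2) \<Longrightarrow> t1 = t2"
proof (induction \<xi> arbitrary: t1 t2 rule: kW.underS_induct)
  case (less \<xi>)
  then show ?case using branch_node_unique_step by blast
qed

definition branch_of :: "('d \<Rightarrow> 'c) \<Rightarrow> 'k \<Rightarrow> 'k \<Rightarrow> 'w" where
  "branch_of f \<xi> = (THE t. t \<in> under kappa \<xi> \<rightarrow>\<^sub>E W \<and> f \<in> bd_cyl r R (branch_node \<xi> t))"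

lemma branch_of_eq:
  assumes "\<xi> \<in> Field kappa" "t \<in> under kappa \<xi> \<rightarrow>\<^sub>E W" "f \<in> bd_cyl r R (branch_node \<xi> t)"
  shows "branch_of f \<xi> = t"
  unfolding branch_of_def
  by (rule the_equality) (use assms branch_node_unique in blast)+

lemma restrict_branch_of:
  assumes \<zeta>: "\<zeta> \<in> Field kappa" and t: "t \<in> under kappa \<zeta> \<rightarrow>\<^sub>E W" "f \<in> bd_cyl r R (branch_node \<zeta> t)"
  shows "restrict (\<lambda>y. branch_of f y y) (under kappa \<zeta>) = t"
proof -
  have "branch_of f y y = t y" if y: "y \<in> under kappa \<zeta>" for y
  proof (cases "y = \<zeta>")
    case True
    then show ?thesis using branch_of_eq[OF \<zeta> t] by simp
  next
    case False
    then have yS: "y \<in> underS kappa \<zeta>" using y unfolding under_def underS_def by blast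
    have "f \<in> bd_cyl r R (branch_node y (restrict t (under kappa y)))"
      using bd_cyl_antimono[OF branch_node_mono[OF \<zeta> t(1) yS]] t(2) by blast
    then have "branch_of f y = restrict t (under kappa y)"
      by (rule branch_of_eq[OF underS_Field[OF yS] kW.restrict_under_PiE[OF t(1) kW.underS_less[OF yS]]])
    then show ?thesis using kW.under_refl[OF underS_Field[OF yS]] by simp
  qed
  then show ?thesis using t(1) by (auto simp: fun_eq_iff PiE_iff extensional_def)
qed

lemma branch_node_exists_step:
  assumes \<xi>: "\<xi> \<in> Field kappa" and f: "f \<in> bd_carrier r R"
    and IH: "\<And>\<zeta>. \<zeta> \<in> underS kappa \<xi> \<Longrightarrow> \<exists>t\<in>under kappa \<zeta> \<rightarrow>\<^sub>E W. f \<in> bd_cyl r R (branch_node \<zeta> t)"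
  shows "\<exists>t\<in>under kappa \<xi> \<rightarrow>\<^sub>E W. f \<in> bd_cyl r R (branch_node \<xi> t)"
proof -
  define g where "g y = branch_of f y y" for y
  have g_below: "restrict g (under kappa \<zeta>) \<in> under kappa \<zeta> \<rightarrow>\<^sub>E W \<and>
      f \<in> bd_cyl r R (branch_node \<zeta> (restrict g (under kappa \<zeta>)))" if "\<zeta> \<in> underS kappa \<xi>" for \<zeta>
    using IH[OF that] restrict_branch_of[OF underS_Field[OF that]] unfolding g_def by metis
  define ext where "ext w = (\<lambda>y\<in>under kappa \<xi>. if y = \<xi> then w else g y)" for w
  have ext_below: "restrict (ext w) (under kappa \<zeta>) = restrict g (under kappa \<zeta>)"
    if "\<zeta> \<in> underS kappa \<xi>" for \<zeta> w
    using kW.under_subset_underS[OF that] underS_notIn[of \<xi> kappa] kW.under_eq_insert[OF \<xi>]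
    unfolding ext_def by (auto simp: fun_eq_iff restrict_def)
  have ext_PiE: "ext w \<in> under kappa \<xi> \<rightarrow>\<^sub>E W" if "w \<in> W" for w
  proof -
    have "g y \<in> W" if "y \<in> underS kappa \<xi>" for y
      using g_below[OF that] kW.under_refl[OF underS_Field[OF that]] by (auto simp: PiE_iff)
    then show ?thesis using \<open>w \<in> W\<close> kW.under_eq_insert[OF \<xi>] unfolding ext_def by auto
  qed
  obtain w0 where w0: "w0 \<in> W" using kW.two_values by blast
  let ?s = "stem \<xi> (ext w0)"
  have s: "?s \<in> bd_nodes r R" by (rule stem_in_bd_nodes[OF \<xi> ext_PiE[OF w0]])
  have c: "cof_seq \<xi> \<in> Field r" using cof_seq(1) \<xi> by blast
  have "f \<in> bd_cyl r R ?s"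
    unfolding stem_def by (rule bd_cyl_node_Union[OF f]) (use g_below ext_below in simp)
  then obtain w where w: "w \<in> W" "f \<in> bd_cyl r R (split_node ?s (cof_seq \<xi>) w)"
    using node_partitionD(4)[OF split_node(2)[OF s c]] by blast
  have "stem \<xi> (ext w) = ?s"
    by (rule stem_cong) (auto simp: ext_def kW.under_eq_insert[OF \<xi>] underS_def)
  moreover have "ext w \<xi> = w" using kW.under_refl[OF \<xi>] unfolding ext_def by simp
  ultimately have "branch_node \<xi> (ext w) = split_node ?s (cof_seq \<xi>) w" by (simp add: branch_node_eq)
  then have "f \<in> bd_cyl r R (branch_node \<xi> (ext w))" using w(2) by simp
  then show ?thesis using ext_PiE[OF w(1)] by blast
qed

lemma branch_node_exists:
  "\<xi> \<in> Field kappa \<Longrightarrow> f \<in> bd_carrier r R \<Longrightarrow> \<exists>t\<in>under kappa \<xi> \<rightarrow>\<^sub>E W. f \<in> bd_cyl r R (branch_node \<xi> t)"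
proof (induction \<xi> rule: kW.underS_induct)
  case (less \<xi>)
  then show ?case using branch_node_exists_step by blast
qed

definition branch_map :: "('k \<Rightarrow> 'w) \<Rightarrow> 'd \<Rightarrow> 'c" where
  "branch_map g = snd (node_Union (Field kappa) (\<lambda>\<xi>. branch_node \<xi> (restrict g (under kappa \<xi>))))"

lemma restrict_under_carrier:
  "g \<in> bd_carrier kappa W \<Longrightarrow> restrict g (under kappa \<xi>) \<in> under kappa \<xi> \<rightarrow>\<^sub>E W"
  using under_Field[of kappa \<xi>] unfolding bd_carrier_def by (auto simp: PiE_iff)

lemma branch_chain:
  assumes g: "g \<in> bd_carrier kappa W" and "\<xi> \<in> Field kappa" "\<eta> \<in> Field kappa"
  shows "node_le (branch_node \<xi> (restrict g (under kappa \<xi>))) (branch_node \<eta> (restrict g (under kappa \<eta>))) \<or>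
    node_le (branch_node \<eta> (restrict g (under kappa \<eta>))) (branch_node \<xi> (restrict g (under kappa \<xi>)))"
proof -
  have below: "node_le (branch_node \<zeta> (restrict g (under kappa \<zeta>))) (branch_node \<eta> (restrict g (under kappa \<eta>)))"
    if "\<eta> \<in> Field kappa" "\<zeta> \<in> underS kappa \<eta>" for \<zeta> \<eta>
    using branch_node_mono[OF that(1) restrict_under_carrier[OF g] that(2)]
    unfolding kW.restrict_restrict_under[OF kW.underS_less[OF that(2)]] .
  have "\<xi> = \<eta> \<or> \<xi> \<in> underS kappa \<eta> \<or> \<eta> \<in> underS kappa \<xi>"
    using wo_rel.TOTALS[OF kW.wo] assms(2,3) unfolding underS_def by blast
  then show ?thesis using below assms(2,3) node_le_refl by blast
qed

lemma branch_covers: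
  assumes g: "g \<in> bd_carrier kappa W" and a: "a \<in> Field r"
  obtains \<xi> where "\<xi> \<in> Field kappa" "a \<in> fst (branch_node \<xi> (restrict g (under kappa \<xi>)))"
proof -
  obtain \<xi> where \<xi>: "\<xi> \<in> Field kappa" "(a, cof_seq \<xi>) \<in> r" using cof_seq(2)[OF a] by blast
  let ?n = "branch_node \<xi> (restrict g (under kappa \<xi>))"
  have "cof_seq \<xi> \<in> fst ?n" by (rule cof_seq_in_branch_node[OF \<xi>(1) restrict_under_carrier[OF g]])
  moreover have "ofilter r (fst ?n)"
    by (rule node_domain_ofilter[OF branch_node_in_bd_nodes[OF \<xi>(1) restrict_under_carrier[OF g]]])
  ultimately have "a \<in> fst ?n" using ofilter_under_subset \<xi>(2) by blast
  then show thesis using that \<xi>(1) by blast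
qed

lemma fst_node_Union_branches:
  assumes g: "g \<in> bd_carrier kappa W"
  shows "fst (node_Union (Field kappa) (\<lambda>\<xi>. branch_node \<xi> (restrict g (under kappa \<xi>)))) = Field r"
proof -
  have "fst (branch_node \<xi> (restrict g (under kappa \<xi>))) \<subseteq> Field r" if "\<xi> \<in> Field kappa" for \<xi>
    using branch_node_in_bd_nodes[OF that restrict_under_carrier[OF g]] Order_Relation.underS_Field
    by (force simp: mem_bd_nodes)
  moreover have "\<exists>\<xi>\<in>Field kappa. a \<in> fst (branch_node \<xi> (restrict g (under kappa \<xi>)))"
    if "a \<in> Field r" for a
    using branch_covers[OF g that] by blast
  ultimately show ?thesis unfolding node_Union_def by auto
qed

lemma branch_map_in_carrier:
  assumes g: "g \<in> bd_carrier kappa W"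
  shows "branch_map g \<in> bd_carrier r R"
  using node_Union_PiE[of "Field kappa" "\<lambda>\<xi>. branch_node \<xi> (restrict g (under kappa \<xi>))" R]
    branch_node_in_bd_nodes[OF _ restrict_under_carrier[OF g]]
  unfolding branch_map_def bd_carrier_def fst_node_Union_branches[OF g]
  by (auto simp: mem_bd_nodes)

lemma branch_map_in_bd_cyl:
  assumes g: "g \<in> bd_carrier kappa W" and \<xi>: "\<xi> \<in> Field kappa"
  shows "branch_map g \<in> bd_cyl r R (branch_node \<xi> (restrict g (under kappa \<xi>)))"
proof -
  have "node_le (branch_node \<xi> (restrict g (under kappa \<xi>)))
      (node_Union (Field kappa) (\<lambda>\<xi>. branch_node \<xi> (restrict g (under kappa \<xi>))))"
    by (rule node_Union_upper[OF branch_chain[OF g] \<xi>])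
  then show ?thesis
    using branch_map_in_carrier[OF g] unfolding branch_map_def bd_cyl_def node_le_def by auto
qed

lemma branch_map_in_bd_cyl_iff:
  assumes g: "g \<in> bd_carrier kappa W" and \<xi>: "\<xi> \<in> Field kappa" and t: "t \<in> under kappa \<xi> \<rightarrow>\<^sub>E W"
  shows "branch_map g \<in> bd_cyl r R (branch_node \<xi> t) \<longleftrightarrow> restrict g (under kappa \<xi>) = t"
  using branch_node_unique[OF \<xi> restrict_under_carrier[OF g] t branch_map_in_bd_cyl[OF g \<xi>]]
    branch_map_in_bd_cyl[OF g \<xi>] by blast

lemma eq_if_mem_branch_cyls:
  assumes g: "g \<in> bd_carrier kappa W" and f: "f1 \<in> bd_carrier r R" "f2 \<in> bd_carrier r R"
    and mem: "\<And>\<xi>. \<xi> \<in> Field kappa \<Longrightarrow>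
      f1 \<in> bd_cyl r R (branch_node \<xi> (restrict g (under kappa \<xi>))) \<and>
      f2 \<in> bd_cyl r R (branch_node \<xi> (restrict g (under kappa \<xi>)))"
  shows "f1 = f2"
proof (rule PiE_ext)
  show "f1 \<in> Field r \<rightarrow>\<^sub>E R" "f2 \<in> Field r \<rightarrow>\<^sub>E R" using f unfolding bd_carrier_def by auto
  fix a assume "a \<in> Field r"
  then obtain \<xi> where "\<xi> \<in> Field kappa" "a \<in> fst (branch_node \<xi> (restrict g (under kappa \<xi>)))"
    using branch_covers[OF g] by blast
  then show "f1 a = f2 a" using mem unfolding bd_cyl_def by auto
qed

lemma inj_on_branch_map: "inj_on branch_map (bd_carrier kappa W)"
proof (rule inj_onI)
  fix g1 g2 assume g: "g1 \<in> bd_carrier kappa W" "g2 \<in> bd_carrier kappa W"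
    and eq: "branch_map g1 = branch_map g2"
  show "g1 = g2"
  proof (rule PiE_ext)
    show "g1 \<in> Field kappa \<rightarrow>\<^sub>E W" "g2 \<in> Field kappa \<rightarrow>\<^sub>E W" using g unfolding bd_carrier_def by auto
    fix \<xi> assume \<xi>: "\<xi> \<in> Field kappa"
    have "restrict g1 (under kappa \<xi>) = restrict g2 (under kappa \<xi>)"
      using branch_map_in_bd_cyl_iff[OF g(1) \<xi> restrict_under_carrier[OF g(2)]]
        branch_map_in_bd_cyl[OF g(2) \<xi>] eq by simp
    then show "g1 \<xi> = g2 \<xi>" using kW.under_refl[OF \<xi>] by (metis restrict_apply')
  qed
qed

lemma branch_map_surj:
  assumes f: "f \<in> bd_carrier r R"
  obtains g where "g \<in> bd_carrier kappa W" "branch_map g = f"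
proof -
  define g where "g = (\<lambda>y\<in>Field kappa. branch_of f y y)"
  have g_under: "restrict g (under kappa \<xi>) \<in> under kappa \<xi> \<rightarrow>\<^sub>E W \<and>
      f \<in> bd_cyl r R (branch_node \<xi> (restrict g (under kappa \<xi>)))" if \<xi>: "\<xi> \<in> Field kappa" for \<xi>
  proof -
    obtain t where t: "t \<in> under kappa \<xi> \<rightarrow>\<^sub>E W" "f \<in> bd_cyl r R (branch_node \<xi> t)"
      using branch_node_exists[OF \<xi> f] by blast
    have "restrict g (under kappa \<xi>) = restrict (\<lambda>y. branch_of f y y) (under kappa \<xi>)"
      using under_Field[of kappa \<xi>] unfolding g_def by (auto simp: fun_eq_iff)
    then show ?thesis using restrict_branch_of[OF \<xi> t] t by simp
  qed
  have g: "g \<in> bd_carrier kappa W"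
  proof -
    have "g \<xi> \<in> W" if "\<xi> \<in> Field kappa" for \<xi>
      using g_under[OF that] kW.under_refl[OF that] by (auto simp: PiE_iff)
    then show ?thesis unfolding g_def bd_carrier_def by auto
  qed
  have "branch_map g = f"
    by (rule eq_if_mem_branch_cyls[OF g branch_map_in_carrier[OF g] f])
      (use g_under branch_map_in_bd_cyl[OF g] in blast)
  then show thesis using that g by blast
qed

lemma bd_cyl_under_iff:
  assumes "t \<in> under kappa \<xi> \<rightarrow>\<^sub>E W"
  shows "g \<in> bd_cyl kappa W (under kappa \<xi>, t) \<longleftrightarrow>
    g \<in> bd_carrier kappa W \<and> restrict g (under kappa \<xi>) = t"
  using assms unfolding bd_cyl_def by (auto simp: fun_eq_iff PiE_iff extensional_def)

lemma branch_map_image: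
  assumes \<xi>: "\<xi> \<in> Field kappa" and t: "t \<in> under kappa \<xi> \<rightarrow>\<^sub>E W"
  shows "branch_map ` bd_cyl kappa W (under kappa \<xi>, t) = bd_cyl r R (branch_node \<xi> t)"
proof
  show "branch_map ` bd_cyl kappa W (under kappa \<xi>, t) \<subseteq> bd_cyl r R (branch_node \<xi> t)"
    using branch_map_in_bd_cyl_iff[OF _ \<xi> t] bd_cyl_under_iff[OF t] by blast
  show "bd_cyl r R (branch_node \<xi> t) \<subseteq> branch_map ` bd_cyl kappa W (under kappa \<xi>, t)"
  proof
    fix f assume f: "f \<in> bd_cyl r R (branch_node \<xi> t)"
    then obtain g where g: "g \<in> bd_carrier kappa W" "branch_map g = f"
      using branch_map_surj bd_cyl_subset_carrier by blast
    then have "g \<in> bd_cyl kappa W (under kappa \<xi>, t)"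
      using branch_map_in_bd_cyl_iff[OF g(1) \<xi> t] f bd_cyl_under_iff[OF t] by simp
    then show "f \<in> branch_map ` bd_cyl kappa W (under kappa \<xi>, t)" using g(2) by blast
  qed
qed

lemma continuous_map_branch_map: "continuous_map (bd_space kappa W) (bd_space r R) branch_map"
  unfolding continuous_map_def
proof (intro conjI allI impI)
  show "branch_map \<in> topspace (bd_space kappa W) \<rightarrow> topspace (bd_space r R)"
    using branch_map_in_carrier unfolding kW.topspace_bd_space topspace_bd_space by blast
  fix U assume U: "openin (bd_space r R) U"
  show "openin (bd_space kappa W) {g \<in> topspace (bd_space kappa W). branch_map g \<in> U}"
  proof (subst openin_subopen, intro ballI)
    fix g assume "g \<in> {g \<in> topspace (bd_space kappa W). branch_map g \<in> U}"
    then have g: "g \<in> bd_carrier kappa W" "branch_map g \<in> U"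
      unfolding kW.topspace_bd_space by auto
    obtain m where m: "m \<in> bd_nodes r R" "branch_map g \<in> bd_cyl r R m" "bd_cyl r R m \<subseteq> U"
      using openin_bd_space_nbhd[OF U g(2)] by blast
    obtain a where a: "a \<in> Field r" "fst m = underS r a" using m(1) by (auto simp: mem_bd_nodes)
    obtain \<xi> where \<xi>: "\<xi> \<in> Field kappa" "a \<in> fst (branch_node \<xi> (restrict g (under kappa \<xi>)))"
      using branch_covers[OF g(1) a(1)] by blast
    let ?t = "restrict g (under kappa \<xi>)"
    have t: "?t \<in> under kappa \<xi> \<rightarrow>\<^sub>E W" by (rule restrict_under_carrier[OF g(1)])
    have "fst m \<subseteq> fst (branch_node \<xi> ?t)"
      using ofilter_under_subset[OF node_domain_ofilter[OF branch_node_in_bd_nodes[OF \<xi>(1) t]] _ \<xi>(2)]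
      unfolding a(2) underS_def by blast
    then have cyl_U: "bd_cyl r R (branch_node \<xi> ?t) \<subseteq> U"
      using bd_cyl_subset_if_mem[OF m(2) branch_map_in_bd_cyl[OF g(1) \<xi>(1)]] m(3) by blast
    let ?V = "bd_cyl kappa W (under kappa \<xi>, ?t)"
    have "branch_map ` ?V \<subseteq> U"
      using branch_map_image[OF \<xi>(1) t] cyl_U by simp
    then have "?V \<subseteq> {g \<in> bd_carrier kappa W. branch_map g \<in> U}"
      using bd_cyl_subset_carrier by blast
    moreover have "(under kappa \<xi>, ?t) \<in> bd_nodes kappa W"
      using kW.under_eq_underS[of \<xi>] t by (auto simp: mem_bd_nodes)
    then have "openin (bd_space kappa W) ?V" by (rule kW.openin_bd_cyl)
    moreover have "g \<in> ?V" using bd_cyl_under_iff[OF t] g(1) by blast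
    ultimately show "\<exists>T. openin (bd_space kappa W) T \<and> g \<in> T \<and>
        T \<subseteq> {g \<in> topspace (bd_space kappa W). branch_map g \<in> U}"
      unfolding kW.topspace_bd_space by blast
  qed
qed

lemma open_map_branch_map: "open_map (bd_space kappa W) (bd_space r R) branch_map"
  unfolding open_map_def
proof (intro allI impI)
  fix U assume U: "openin (bd_space kappa W) U"
  show "openin (bd_space r R) (branch_map ` U)"
  proof (subst openin_subopen, intro ballI)
    fix f assume "f \<in> branch_map ` U"
    then obtain g where g: "g \<in> U" "f = branch_map g" by blast
    obtain n where n: "n \<in> bd_nodes kappa W" "g \<in> bd_cyl kappa W n" "bd_cyl kappa W n \<subseteq> U"
      using kW.openin_bd_space_nbhd[OF U g(1)] by blast
    obtain \<xi> where \<xi>: "\<xi> \<in> Field kappa" "fst n = underS kappa \<xi>" using n(1) by (auto simp: mem_bd_nodes)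
    have gc: "g \<in> bd_carrier kappa W" using n(2) bd_cyl_subset_carrier by blast
    let ?t = "restrict g (under kappa \<xi>)"
    have t: "?t \<in> under kappa \<xi> \<rightarrow>\<^sub>E W" by (rule restrict_under_carrier[OF gc])
    have "g \<in> bd_cyl kappa W (under kappa \<xi>, ?t)" using bd_cyl_under_iff[OF t] gc by blast
    then have "bd_cyl kappa W (under kappa \<xi>, ?t) \<subseteq> bd_cyl kappa W n"
      using bd_cyl_subset_if_mem[OF n(2)] \<xi>(2) underS_subset_under by fastforce
    then have "bd_cyl r R (branch_node \<xi> ?t) \<subseteq> branch_map ` U"
      using branch_map_image[OF \<xi>(1) t] n(3) by blast
    moreover have "f \<in> bd_cyl r R (branch_node \<xi> ?t)"
      using branch_map_in_bd_cyl[OF gc \<xi>(1)] g(2) by simp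
    moreover have "openin (bd_space r R) (bd_cyl r R (branch_node \<xi> ?t))"
      by (rule openin_bd_cyl[OF branch_node_in_bd_nodes[OF \<xi>(1) t]])
    ultimately show "\<exists>T. openin (bd_space r R) T \<and> f \<in> T \<and> T \<subseteq> branch_map ` U" by blast
  qed
qed

lemma homeomorphic_map_branch_map: "homeomorphic_map (bd_space kappa W) (bd_space r R) branch_map"
proof (rule bijective_open_imp_homeomorphic_map[OF continuous_map_branch_map open_map_branch_map])
  have "bd_carrier r R \<subseteq> branch_map ` bd_carrier kappa W"
    using branch_map_surj by (metis image_eqI subsetI)
  then show "branch_map ` topspace (bd_space kappa W) = topspace (bd_space r R)"
    using branch_map_in_carrier unfolding kW.topspace_bd_space topspace_bd_space by blast
  show "inj_on branch_map (topspace (bd_space kappa W))"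
    unfolding kW.topspace_bd_space by (rule inj_on_branch_map)
qed

end

section \<open>The four spaces\<close>

lemma bd_space_homeomorphic_if_card_nodes:
  assumes X: "bd_power_cf r R kappa" and Y: "bd_power_cf r' R' kappa"
    and eq: "|bd_nodes r R| =o |bd_nodes r' R'|"
  shows "bd_space r R homeomorphic_space bd_space r' R'"
proof -
  interpret X: bd_power_homeo r R kappa "bd_nodes r' R'"
    by (rule bd_power_homeo.intro[OF X]) (simp add: bd_power_homeo_axioms_def ordIso_symmetric[OF eq])
  interpret Y: bd_power_homeo r' R' kappa "bd_nodes r' R'"
    by (rule bd_power_homeo.intro[OF Y]) (simp add: bd_power_homeo_axioms_def card_of_refl)
  have "bd_space kappa (bd_nodes r' R') homeomorphic_space bd_space r R"
    using X.homeomorphic_map_branch_map homeomorphic_map_imp_homeomorphic_space by blast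
  moreover have "bd_space kappa (bd_nodes r' R') homeomorphic_space bd_space r' R'"
    using Y.homeomorphic_map_branch_map homeomorphic_map_imp_homeomorphic_space by blast
  ultimately show ?thesis using homeomorphic_space_sym homeomorphic_space_trans by blast
qed

lemma homeo_iff_same_weight_bd_space:
  assumes X: "bd_power_cf r R kappa" and Y: "bd_power_cf r' R' kappa"
  shows "homeo_iff_same_weight (bd_space r R) (bd_space r' R')"
proof -
  have "bd_power r R" "bd_power r' R'" using X Y unfolding bd_power_cf_def by blast+
  then show ?thesis
    unfolding homeo_iff_same_weight_def same_weight_bd_space_iff
    using homeomorphic_space_same_weight same_weight_bd_space_iff
      bd_space_homeomorphic_if_card_nodes[OF X Y] by blast
qed

lemma cf_eq_self:
  assumes "Card_order kappa" "infinite (Field kappa)" "regularCard kappa"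
  shows "cf_eq kappa kappa"
proof -
  have "cofinal (Field kappa) kappa"
    unfolding cofinal_def using infinite_Card_order_limit[OF assms(1,2)] by blast
  moreover have "|Field kappa| =o kappa" by (rule card_of_Field_ordIso[OF assms(1)])
  moreover have "kappa \<le>o |K|" if "K \<subseteq> Field kappa" "cofinal K kappa" for K
    using assms(3) that unfolding regularCard_def by (simp add: ordIso_iff_ordLeq)
  ultimately show ?thesis unfolding cf_eq_def by blast
qed

lemma cf_less_if_not_regularCard:
  assumes "Card_order kappa" "Card_order mu" "cf_eq mu kappa" "\<not> regularCard mu"
  shows "|Field kappa| <o |Field mu|"
proof (rule ccontr)
  assume "\<not> |Field kappa| <o |Field mu|"
  then have "|Field mu| \<le>o |Field kappa|" by (metis not_ordLess_iff_ordLeq card_of_Well_order)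
  then have "mu \<le>o kappa"
    using card_of_Field_ordIso[OF assms(1)] card_of_Field_ordIso[OF assms(2)]
    by (meson ordIso_iff_ordLeq ordLeq_transitive)
  have "regularCard mu"
    unfolding regularCard_def
  proof (intro allI impI)
    fix K assume K: "K \<subseteq> Field mu \<and> cofinal K mu"
    then have "kappa \<le>o |K|" using assms(3) unfolding cf_eq_def by blast
    moreover have "|K| \<le>o mu"
      using card_of_mono1[of K "Field mu"] K card_of_Field_ordIso[OF assms(2)] ordLeq_ordIso_trans by blast
    ultimately show "|K| =o mu"
      using \<open>mu \<le>o kappa\<close> ordIso_iff_ordLeq ordLeq_transitive by blast
  qed
  then show False using assms(4) by blast
qed

lemma bd_power_if_infinite:
  assumes "Card_order r" "infinite (Field r)" "infinite R"
  shows "bd_power r R"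
  using assms infinite_imp_two_elements by (simp add: bd_power_def)

theorem mainTheorem3:
  fixes kappa :: "'k rel" and mu :: "'m rel"
  assumes "Card_order kappa" and "infinite (Field kappa)" and "regularCard kappa"
    and "Card_order mu" and "infinite (Field mu)" and "\<not> regularCard mu"
    and "cf_eq mu kappa"
  shows "let X1 = bd_space kappa (Field mu);
             X2 = bd_space mu (UNIV :: bool set);
             X3 = bd_space mu (Field kappa);
             X4 = bd_space mu (Field mu)
         in homeo_iff_same_weight X1 X1 \<and> homeo_iff_same_weight X1 X2 \<and>
            homeo_iff_same_weight X1 X3 \<and> homeo_iff_same_weight X1 X4 \<and>
            homeo_iff_same_weight X2 X1 \<and> homeo_iff_same_weight X2 X2 \<and>
            homeo_iff_same_weight X2 X3 \<and> homeo_iff_same_weight X2 X4 \<and>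
            homeo_iff_same_weight X3 X1 \<and> homeo_iff_same_weight X3 X2 \<and>
            homeo_iff_same_weight X3 X3 \<and> homeo_iff_same_weight X3 X4 \<and>
            homeo_iff_same_weight X4 X1 \<and> homeo_iff_same_weight X4 X2 \<and>
            homeo_iff_same_weight X4 X3 \<and> homeo_iff_same_weight X4 X4"
proof -
  have less: "|Field kappa| <o |Field mu|"
    by (rule cf_less_if_not_regularCard[OF assms(1,4,7,6)])
  have X1: "bd_power_cf kappa (Field mu) kappa"
    using bd_power_if_infinite[OF assms(1,2,5)] cf_eq_self[OF assms(1-3)] assms(1,2,5) less
    by (auto simp: bd_power_cf_def bd_power_cf_axioms_def ordLess_imp_ordLeq)
  have X2: "bd_power_cf mu (UNIV :: bool set) kappa"
    using assms(1,2,4,5,7) less by (auto simp: bd_power_cf_def bd_power_cf_axioms_def bd_power_def)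
  have X3: "bd_power_cf mu (Field kappa) kappa"
    using bd_power_if_infinite[OF assms(4,5,2)] assms(1,2,7) less
    by (auto simp: bd_power_cf_def bd_power_cf_axioms_def)
  have X4: "bd_power_cf mu (Field mu) kappa"
    using bd_power_if_infinite[OF assms(4,5,5)] assms(1,2,7) less
    by (auto simp: bd_power_cf_def bd_power_cf_axioms_def)
  show ?thesis
    unfolding Let_def by (intro conjI homeo_iff_same_weight_bd_space[where kappa = kappa] X1 X2 X3 X4)
qed

end
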